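(* Let $\mathcal{S} \subseteq 2^{[n]}$ be a Sperner family of size at most four, $h:\mathcal{S}\rightarrow 2^{[n]}$ a function such that $h(S)\subseteq S$ for every $S\in \mathcal{S}$, and suppose that the resulting family $\mathcal{F}(\mathcal{S},h)$ is s-extremal. Then there is a set $F\subseteq [n]$ with $F\notin \mathcal{F}(\mathcal{S},h)$ such that $\mathcal{F}'=\mathcal{F}(\mathcal{S},h)\cup\{F\}$ is again s-extremal.
   Context: For $n\in\mathbb{N}$, $[n]=\{1,\dots,n\}$. A set system $\mathcal{F}\subseteq 2^{[n]}$ shatters $S\subseteq[n]$ if $\{F\cap S : F\in\mathcal{F}\}=2^S$; $\text{Sh}(\mathcal{F})$ denotes the family of sets shattered by $\mathcal{F}$. By the Sauer–Shelah lemma $|\text{Sh}(\mathcal{F})|\ge|\mathcal{F}|$ always; $\mathcal{F}$ is called shattering-extremal (s-extremal) if $|\text{Sh}(\mathcal{F})|=|\mathcal{F}|$. A Sperner family is a family of sets none of which contains another. For $H\subseteq S\subseteq[n]$ let $\mathcal{Q}_{S,H}=\{H\cup B : B\subseteq [n]\setminus S\}$, the collection of all subsets of $[n]$ whose intersection with $S$ is exactly $H$. For a Sperner family $\mathcal{S}\subseteq 2^{[n]}$ and a function $h:\mathcal{S}\to 2^{[n]}$ with $h(S)\subseteq S$ for all $S\in\mathcal{S}$, define $\mathcal{F}(\mathcal{S},h)=2^{[n]}\setminus\bigcup_{S\in\mathcal{S}}\mathcal{Q}_{S,h(S)}$. *)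

theory Defs
  imports Main
begin

definition shatters :: "nat set set \<Rightarrow> nat set \<Rightarrow> bool" where
  "shatters F S \<longleftrightarrow> (\<lambda>A. A \<inter> S) ` F = Pow S"

definition Sh :: "nat set set \<Rightarrow> nat set set" where
  "Sh F = {S. shatters F S}"

definition s_extremal :: "nat set set \<Rightarrow> bool" where
  "s_extremal F \<longleftrightarrow> card (Sh F) = card F"

definition sperner :: "nat set set \<Rightarrow> bool" where
  "sperner S \<longleftrightarrow> (\<forall>A\<in>S. \<forall>B\<in>S. A \<subseteq> B \<longrightarrow> A = B)"

definition Qcube :: "nat \<Rightarrow> nat set \<Rightarrow> nat set \<Rightarrow> nat set set" where
  "Qcube n S H = {H \<union> B | B. B \<subseteq> {1..n} - S}"

definition Ffam :: "nat \<Rightarrow> nat set set \<Rightarrow> (nat set \<Rightarrow> nat set) \<Rightarrow> nat set set" where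
  "Ffam n S h = Pow {1..n} - (\<Union>T\<in>S. Qcube n T (h T))"

end

theory Submission
  imports Defs
begin

text \<open>View \<open>F(S, h)\<close> as the complement in \<open>2^[n]\<close> of the union of the subcubes \<open>Q_{S,h(S)}\<close>.
  If a point \<open>X\<close> of such a subcube has all its neighbours in the directions of \<open>S\<close> outside the
  union, then adding \<open>X\<close> creates at most one new shattered set, namely \<open>S\<close>, so by the
  Sauer--Shelah--Pajor inequality the enlarged family is again s-extremal. It remains to show
  that if there is no such point, the family is not s-extremal. This goes by induction on the
  ground set: a coordinate \<open>c\<close> such that no two members of \<open>S\<close> differ exactly in \<open>c\<close> can be
  projected away, passing to the reduct of the family, and a coordinate on which the values of
  \<open>h\<close> never conflict can be dropped by passing to a face; both operations preserve
  s-extremality. When every coordinate is of neither kind, at most four subcubes leave only a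
  few configurations, and in each of them two uncovered sets are found which form, after
  restriction to a subcube, a family of two sets shattering at least three sets.\<close>

section \<open>Shattering, faces and reducts\<close>

lemma shatters_subset:
  assumes "shatters A T" "A \<subseteq> Pow U"
  shows "T \<subseteq> U"
proof
  fix t assume "t \<in> T"
  then have "{t} \<in> Pow T" by simp
  with assms(1) obtain Y where "Y \<in> A" "Y \<inter> T = {t}" unfolding shatters_def by (metis imageE)
  then show "t \<in> U" using assms(2) by blast
qed

lemma Sh_subset_Pow: "A \<subseteq> Pow U \<Longrightarrow> Sh A \<subseteq> Pow U"
  unfolding Sh_def using shatters_subset by blast

lemma finite_Sh: "finite U \<Longrightarrow> A \<subseteq> Pow U \<Longrightarrow> finite (Sh A)"
  using Sh_subset_Pow by (meson finite_Pow_iff finite_subset)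

lemma shattersI:
  assumes "\<And>R. R \<subseteq> T \<Longrightarrow> \<exists>Y\<in>A. Y \<inter> T = R"
  shows "shatters A T"
  unfolding shatters_def using assms by auto

lemma shattersD:
  assumes "shatters A T" "R \<subseteq> T"
  shows "\<exists>Y\<in>A. Y \<inter> T = R"
  using assms unfolding shatters_def by (metis PowI imageE)

lemma Sh_empty_set: "A \<noteq> {} \<Longrightarrow> {} \<in> Sh A"
  unfolding Sh_def shatters_def by auto

definition lower_face :: "nat set set \<Rightarrow> nat \<Rightarrow> nat set set" where
  "lower_face A c = {Y \<in> A. c \<notin> Y}"

definition upper_face :: "nat set set \<Rightarrow> nat \<Rightarrow> nat set set" where
  "upper_face A c = (\<lambda>Y. Y - {c}) ` {Y \<in> A. c \<in> Y}"

lemma lower_face_subset: "A \<subseteq> Pow U \<Longrightarrow> lower_face A c \<subseteq> Pow (U - {c})"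
  unfolding lower_face_def by auto

lemma upper_face_subset: "A \<subseteq> Pow U \<Longrightarrow> upper_face A c \<subseteq> Pow (U - {c})"
  unfolding upper_face_def by auto

lemma card_lower_upper_face:
  assumes "finite A"
  shows "card A = card (lower_face A c) + card (upper_face A c)"
proof -
  have "inj_on (\<lambda>Y. Y - {c}) {Y \<in> A. c \<in> Y}"
    by (rule inj_onI) (metis insert_Diff mem_Collect_eq)
  then have "card (upper_face A c) = card {Y \<in> A. c \<in> Y}"
    unfolding upper_face_def by (rule card_image)
  moreover have "A = lower_face A c \<union> {Y \<in> A. c \<in> Y}" "lower_face A c \<inter> {Y \<in> A. c \<in> Y} = {}"
    unfolding lower_face_def by auto
  ultimately show ?thesis using assms
    by (metis card_Un_disjoint finite_Un)
qed

lemma Sh_lower_faceD: "T \<in> Sh (lower_face A c) \<Longrightarrow> T \<in> Sh A"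
  unfolding Sh_def lower_face_def by (auto intro!: shattersI dest: shattersD)

lemma Sh_upper_faceD:
  assumes "T \<in> Sh (upper_face A c)" "c \<notin> T"
  shows "T \<in> Sh A"
proof -
  have "shatters A T"
  proof (rule shattersI)
    fix R assume "R \<subseteq> T"
    then obtain Z where "Z \<in> upper_face A c" "Z \<inter> T = R"
      using assms(1) shattersD unfolding Sh_def by blast
    then obtain Y where "Y \<in> A" "Z = Y - {c}" unfolding upper_face_def by auto
    then show "\<exists>Y\<in>A. Y \<inter> T = R" using \<open>Z \<inter> T = R\<close> assms(2) by (intro bexI[of _ Y]) auto
  qed
  then show ?thesis unfolding Sh_def by simp
qed

lemma insert_Sh_faces:
  assumes "T \<in> Sh (lower_face A c)" "T \<in> Sh (upper_face A c)" "c \<notin> T"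
  shows "insert c T \<in> Sh A"
proof -
  have "shatters A (insert c T)"
  proof (rule shattersI)
    fix R assume R: "R \<subseteq> insert c T"
    show "\<exists>Y\<in>A. Y \<inter> insert c T = R"
    proof (cases "c \<in> R")
      case True
      then have "R - {c} \<subseteq> T" using R by auto
      then obtain Z where "Z \<in> upper_face A c" "Z \<inter> T = R - {c}"
        using assms(2) shattersD unfolding Sh_def by blast
      then obtain Y where "Y \<in> A" "c \<in> Y" "Z = Y - {c}" unfolding upper_face_def by auto
      then show ?thesis using \<open>Z \<inter> T = R - {c}\<close> True assms(3) by (intro bexI[of _ Y]) auto
    next
      case False
      then have "R \<subseteq> T" using R by auto
      then obtain Y where "Y \<in> lower_face A c" "Y \<inter> T = R"
        using assms(1) shattersD unfolding Sh_def by blast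
      then show ?thesis using False unfolding lower_face_def by (intro bexI[of _ Y]) auto
    qed
  qed
  then show ?thesis unfolding Sh_def by simp
qed

lemma card_insert_image_Un:
  assumes "finite U" "S0 \<subseteq> Pow (U - {c})" "S1 \<subseteq> Pow (U - {c})"
  shows "card (S0 \<union> insert c ` S1) = card S0 + card S1"
proof -
  have fin: "finite S0" "finite S1"
    using assms by (meson finite_Diff finite_Pow_iff finite_subset)+
  have "inj_on (insert c) S1"
  proof (rule inj_onI)
    fix x y assume "x \<in> S1" "y \<in> S1" "insert c x = insert c y"
    moreover have "c \<notin> x" "c \<notin> y" using assms(3) calculation(1,2) by auto
    ultimately show "x = y" by (metis insert_ident)
  qed
  then have "card (insert c ` S1) = card S1" by (rule card_image)
  moreover have "S0 \<inter> insert c ` S1 = {}" using assms(2) by auto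
  ultimately show ?thesis using fin by (simp add: card_Un_disjoint)
qed

lemma card_Sh_faces_le:
  assumes U: "finite U" "A \<subseteq> Pow U"
  shows "card (Sh (lower_face A c)) + card (Sh (upper_face A c)) \<le> card (Sh A)"
proof -
  let ?S0 = "Sh (lower_face A c)" and ?S1 = "Sh (upper_face A c)"
  have s0: "?S0 \<subseteq> Pow (U - {c})" "?S1 \<subseteq> Pow (U - {c})"
    using Sh_subset_Pow[OF lower_face_subset[OF U(2)]] Sh_subset_Pow[OF upper_face_subset[OF U(2)]]
    by auto
  have fin: "finite ?S0" "finite ?S1"
    using s0 U(1) by (meson finite_Diff finite_Pow_iff finite_subset)+
  have "card ?S0 + card ?S1 = card (?S0 \<union> ?S1) + card (?S0 \<inter> ?S1)"
    using card_Un_Int[OF fin] by simp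
  also have "\<dots> = card ((?S0 \<union> ?S1) \<union> insert c ` (?S0 \<inter> ?S1))"
    by (rule card_insert_image_Un[OF U(1), symmetric]) (use s0 in auto)
  also have "\<dots> \<le> card (Sh A)"
  proof (rule card_mono)
    show "finite (Sh A)" using finite_Sh[OF U] .
    show "(?S0 \<union> ?S1) \<union> insert c ` (?S0 \<inter> ?S1) \<subseteq> Sh A"
      using Sh_lower_faceD Sh_upper_faceD insert_Sh_faces s0 by blast
  qed
  finally show ?thesis .
qed

lemma card_le_card_Sh:
  assumes "finite U" "A \<subseteq> Pow U"
  shows "card A \<le> card (Sh A)"
  using assms
proof (induction U arbitrary: A rule: finite_induct)
  case empty
  then have "A = {} \<or> A = {{}}" by auto
  then show ?case
    using Sh_empty_set[of A] finite_Sh[of "{}" A] by (auto simp: Suc_le_eq card_gt_0_iff)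
next
  case (insert c U)
  have faces: "lower_face A c \<subseteq> Pow U" "upper_face A c \<subseteq> Pow U"
    using lower_face_subset[OF insert.prems, of c] upper_face_subset[OF insert.prems, of c]
      insert.hyps(2) by auto
  have "finite A" using insert by (meson finite.insertI finite_Pow_iff finite_subset)
  then have "card A = card (lower_face A c) + card (upper_face A c)" by (rule card_lower_upper_face)
  also have "\<dots> \<le> card (Sh (lower_face A c)) + card (Sh (upper_face A c))"
    using insert.IH faces by (simp add: add_mono)
  also have "\<dots> \<le> card (Sh A)"
    using card_Sh_faces_le[of "insert c U" A c] insert.hyps insert.prems by simp
  finally show ?case .
qed

lemma s_extremal_faces:
  assumes "finite U" "A \<subseteq> Pow U" "s_extremal A"
  shows "s_extremal (lower_face A c)" "s_extremal (upper_face A c)"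
proof -
  have faces: "lower_face A c \<subseteq> Pow U" "upper_face A c \<subseteq> Pow U"
    using lower_face_subset[OF assms(2), of c] upper_face_subset[OF assms(2), of c] by auto
  have "finite A" using assms by (meson finite_Pow_iff finite_subset)
  have "card (lower_face A c) \<le> card (Sh (lower_face A c))"
    "card (upper_face A c) \<le> card (Sh (upper_face A c))"
    using card_le_card_Sh assms(1) faces by blast+
  moreover have "card (Sh (lower_face A c)) + card (Sh (upper_face A c))
      \<le> card (lower_face A c) + card (upper_face A c)"
    using card_Sh_faces_le[OF assms(1,2), of c] assms(3) card_lower_upper_face[OF \<open>finite A\<close>, of c]
    unfolding s_extremal_def by simp
  ultimately show "s_extremal (lower_face A c)" "s_extremal (upper_face A c)"
    unfolding s_extremal_def by linarith+
qed

definition reduct :: "nat set set \<Rightarrow> nat \<Rightarrow> nat set set" where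
  "reduct A c = {Y \<in> A. c \<notin> Y \<and> insert c Y \<in> A}"

lemma reduct_eq_faces: "reduct A c = lower_face A c \<inter> upper_face A c"
proof (intro set_eqI iffI)
  fix Y assume "Y \<in> reduct A c"
  then have "Y \<in> A" "c \<notin> Y" "insert c Y \<in> A" unfolding reduct_def by auto
  moreover have "Y = insert c Y - {c}" using \<open>c \<notin> Y\<close> by simp
  ultimately show "Y \<in> lower_face A c \<inter> upper_face A c"
    unfolding lower_face_def upper_face_def by blast
next
  fix Y assume "Y \<in> lower_face A c \<inter> upper_face A c"
  then obtain Z where "Y \<in> A" "c \<notin> Y" "Z \<in> A" "c \<in> Z" "Y = Z - {c}"
    unfolding lower_face_def upper_face_def by auto
  moreover have "insert c Y = Z" using calculation by auto
  ultimately show "Y \<in> reduct A c" unfolding reduct_def by auto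
qed

lemma Sh_union_facesD:
  assumes "T \<in> Sh (lower_face A c \<union> upper_face A c)" "c \<notin> T"
  shows "T \<in> Sh A"
proof -
  have "shatters A T"
  proof (rule shattersI)
    fix R assume "R \<subseteq> T"
    then obtain Z where "Z \<in> lower_face A c \<union> upper_face A c" "Z \<inter> T = R"
      using assms(1) shattersD unfolding Sh_def by blast
    then show "\<exists>Y\<in>A. Y \<inter> T = R"
      using assms(2) unfolding lower_face_def upper_face_def by auto
  qed
  then show ?thesis unfolding Sh_def by simp
qed

lemma insert_Sh_reduct:
  assumes "T \<in> Sh (reduct A c)" "c \<notin> T"
  shows "insert c T \<in> Sh A"
proof -
  have "shatters A (insert c T)"
  proof (rule shattersI)
    fix R assume "R \<subseteq> insert c T"
    then have "R - {c} \<subseteq> T" by auto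
    then obtain Z where Z: "Z \<in> reduct A c" "Z \<inter> T = R - {c}"
      using assms(1) shattersD unfolding Sh_def by blast
    then have "Z \<in> A" "insert c Z \<in> A" "c \<notin> Z" unfolding reduct_def by auto
    show "\<exists>Y\<in>A. Y \<inter> insert c T = R"
    proof (cases "c \<in> R")
      case True
      then show ?thesis using Z(2) assms(2) \<open>insert c Z \<in> A\<close> by (intro bexI[of _ "insert c Z"]) auto
    next
      case False
      then show ?thesis using Z(2) assms(2) \<open>Z \<in> A\<close> \<open>c \<notin> Z\<close> by (intro bexI[of _ Z]) auto
    qed
  qed
  then show ?thesis unfolding Sh_def by simp
qed

text \<open>The reduct of an s-extremal family is s-extremal: the sets shattered by the union of the
  two faces and the sets shattered by their intersection, with \<open>c\<close> added, are disjoint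
  families of sets shattered by \<open>A\<close>, and the two faces have as many members together as
  their union and intersection.\<close>

lemma s_extremal_reduct:
  assumes U: "finite U" "A \<subseteq> Pow U" and ext: "s_extremal A"
  shows "s_extremal (reduct A c)"
proof -
  let ?P = "lower_face A c \<union> upper_face A c" and ?R = "reduct A c"
  have finA: "finite A" using U by (meson finite_Pow_iff finite_subset)
  have sub: "?P \<subseteq> Pow (U - {c})" "?R \<subseteq> Pow (U - {c})"
    using lower_face_subset[OF U(2)] upper_face_subset[OF U(2)]
    unfolding reduct_eq_faces by blast+
  have Sh_sub: "Sh ?P \<subseteq> Pow (U - {c})" "Sh ?R \<subseteq> Pow (U - {c})"
    using Sh_subset_Pow sub by blast+
  have "card (Sh ?P) + card (Sh ?R) = card (Sh ?P \<union> insert c ` Sh ?R)"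
    using card_insert_image_Un[OF U(1) Sh_sub] by simp
  also have "\<dots> \<le> card (Sh A)"
  proof (rule card_mono)
    show "finite (Sh A)" using finite_Sh[OF U] .
    show "Sh ?P \<union> insert c ` Sh ?R \<subseteq> Sh A"
      using Sh_union_facesD insert_Sh_reduct Sh_sub by blast
  qed
  also have "\<dots> = card (lower_face A c) + card (upper_face A c)"
    using ext card_lower_upper_face[OF finA] unfolding s_extremal_def by simp
  also have "\<dots> = card ?P + card ?R"
    unfolding reduct_eq_faces using finA
    by (intro card_Un_Int) (auto simp: lower_face_def upper_face_def)
  finally have "card (Sh ?P) + card (Sh ?R) \<le> card ?P + card ?R" .
  moreover have "card ?P \<le> card (Sh ?P)" "card ?R \<le> card (Sh ?R)"
    using card_le_card_Sh[of "U - {c}"] U(1) sub by auto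
  ultimately show ?thesis unfolding s_extremal_def by linarith
qed

definition subface :: "nat set set \<Rightarrow> nat set \<Rightarrow> nat set \<Rightarrow> nat set set" where
  "subface A W R = {Y - W | Y. Y \<in> A \<and> Y \<inter> W = R}"

lemma subface_subset: "A \<subseteq> Pow U \<Longrightarrow> subface A W R \<subseteq> Pow (U - W)"
  unfolding subface_def by auto

lemma subface_empty: "subface A {} {} = A"
  unfolding subface_def by auto

lemma subface_insert:
  assumes "c \<notin> W" "R \<subseteq> insert c W"
  shows "subface A (insert c W) R =
    (if c \<in> R then upper_face (subface A W (R - {c})) c else lower_face (subface A W (R - {c})) c)"
proof (cases "c \<in> R")
  case True
  have "subface A (insert c W) R = upper_face (subface A W (R - {c})) c"
  proof (intro set_eqI iffI)
    fix Z assume "Z \<in> subface A (insert c W) R"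
    then obtain Y where Y: "Y \<in> A" "Y \<inter> insert c W = R" "Z = Y - insert c W" unfolding subface_def
      by blast
    then have "Y - W \<in> subface A W (R - {c})" "c \<in> Y - W" using True assms(1) unfolding subface_def
      by auto
    moreover have "Z = (Y - W) - {c}" using Y by auto
    ultimately show "Z \<in> upper_face (subface A W (R - {c})) c" unfolding upper_face_def by blast
  next
    fix Z assume "Z \<in> upper_face (subface A W (R - {c})) c"
    then obtain Y' where Y': "Y' \<in> subface A W (R - {c})" "c \<in> Y'" "Z = Y' - {c}"
      unfolding upper_face_def by auto
    then obtain Y where Y: "Y \<in> A" "Y \<inter> W = R - {c}" "Y' = Y - W" unfolding subface_def by blast
    then have "Y \<inter> insert c W = R" using Y' True assms by auto
    then show "Z \<in> subface A (insert c W) R" using Y Y' unfolding subface_def by blast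
  qed
  then show ?thesis using True by simp
next
  case False
  have "subface A (insert c W) R = lower_face (subface A W (R - {c})) c"
  proof (intro set_eqI iffI)
    fix Z assume "Z \<in> subface A (insert c W) R"
    then obtain Y where Y: "Y \<in> A" "Y \<inter> insert c W = R" "Z = Y - insert c W" unfolding subface_def
      by blast
    then have "Y - W \<in> subface A W (R - {c})" "c \<notin> Y - W" using False assms(1) unfolding subface_def
      by auto
    moreover have "Z = Y - W" using Y False by auto
    ultimately show "Z \<in> lower_face (subface A W (R - {c})) c" unfolding lower_face_def by blast
  next
    fix Z assume "Z \<in> lower_face (subface A W (R - {c})) c"
    then have Z: "Z \<in> subface A W (R - {c})" "c \<notin> Z" unfolding lower_face_def by auto
    then obtain Y where Y: "Y \<in> A" "Y \<inter> W = R - {c}" "Z = Y - W" unfolding subface_def by blast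
    then have "Y \<inter> insert c W = R" using Z False assms by auto
    moreover have "Z = Y - insert c W" using Y Z by auto
    ultimately show "Z \<in> subface A (insert c W) R" using Y unfolding subface_def by blast
  qed
  then show ?thesis using False by simp
qed

lemma s_extremal_subface:
  assumes U: "finite U" "A \<subseteq> Pow U" and ext: "s_extremal A" and W: "W \<subseteq> U" "R \<subseteq> W"
  shows "s_extremal (subface A W R)"
proof -
  have "finite W" using U(1) W(1) by (rule finite_subset[rotated])
  then show ?thesis
    using W
  proof (induction W arbitrary: R rule: finite_induct)
    case empty
    then show ?case using ext by (simp add: subface_empty)
  next
    case (insert c W)
    have "W \<subseteq> U" "R - {c} \<subseteq> W" using insert.prems by auto
    then have "s_extremal (subface A W (R - {c}))" by (rule insert.IH)
    moreover have "subface A W (R - {c}) \<subseteq> Pow (U - W)" using subface_subset[OF U(2)] .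
    moreover have "finite (U - W)" using U(1) by simp
    ultimately have "s_extremal (lower_face (subface A W (R - {c})) c)"
      "s_extremal (upper_face (subface A W (R - {c})) c)"
      by (metis s_extremal_faces)+
    then show ?case unfolding subface_insert[OF insert.hyps(2) insert.prems(2)]
      by (cases "c \<in> R") simp_all
  qed
qed

lemma Suc_card_le_card_Sh_pair:
  assumes "finite E" "E = (P - Q) \<union> (Q - P)"
  shows "Suc (card E) \<le> card (Sh {P \<inter> E, Q \<inter> E})"
proof -
  have singletons: "{e} \<in> Sh {P \<inter> E, Q \<inter> E}" if "e \<in> E" for e
  proof -
    have "shatters {P \<inter> E, Q \<inter> E} {e}"
    proof (rule shattersI)
      fix R assume "R \<subseteq> {e}"
      then have "R = {} \<or> R = {e}" by auto
      moreover have "(e \<in> P \<and> e \<notin> Q) \<or> (e \<in> Q \<and> e \<notin> P)" using that assms(2) by auto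
      ultimately show "\<exists>Y\<in>{P \<inter> E, Q \<inter> E}. Y \<inter> {e} = R" using that by auto
    qed
    then show ?thesis unfolding Sh_def by simp
  qed
  have "inj_on (\<lambda>e. {e}) E" by (auto intro: inj_onI)
  then have "card ((\<lambda>e. {e}) ` E) = card E" by (rule card_image)
  moreover have "{} \<notin> (\<lambda>e. {e}) ` E" by auto
  ultimately have "Suc (card E) = card (insert {} ((\<lambda>e. {e}) ` E))"
    using assms(1) by (metis card_insert_disjoint finite_imageI)
  also have "\<dots> \<le> card (Sh {P \<inter> E, Q \<inter> E})"
  proof (rule card_mono)
    show "finite (Sh {P \<inter> E, Q \<inter> E})" using finite_Sh[OF assms(1), of "{P \<inter> E, Q \<inter> E}"] by auto
    show "insert {} ((\<lambda>e. {e}) ` E) \<subseteq> Sh {P \<inter> E, Q \<inter> E}"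
      using singletons Sh_empty_set[of "{P \<inter> E, Q \<inter> E}"] by auto
  qed
  finally show ?thesis .
qed

text \<open>If two members \<open>P\<close>, \<open>Q\<close> of \<open>A\<close> differ in at least two coordinates \<open>E\<close> and no other
  member agrees with them off \<open>E\<close>, then the subface of \<open>A\<close> through \<open>P\<close> spanned by \<open>E\<close> consists of
  two sets only, yet shatters the empty set and all singletons of \<open>E\<close>.\<close>

lemma not_s_extremal_isolated_pair:
  assumes U: "finite U" "A \<subseteq> Pow U" and PQ: "P \<in> A" "Q \<in> A"
    and E: "E = (P - Q) \<union> (Q - P)" "2 \<le> card E"
    and only: "\<And>Z. Z \<in> A \<Longrightarrow> Z - E = P - E \<Longrightarrow> Z = P \<or> Z = Q"
  shows "\<not> s_extremal A"
proof
  assume ext: "s_extremal A"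
  let ?W = "U - E" and ?R = "P - E"
  have PU: "P \<subseteq> U" "Q \<subseteq> U" using PQ U by auto
  have EU: "E \<subseteq> U" using E(1) PU by auto
  have subface_eq: "subface A ?W ?R = {P \<inter> E, Q \<inter> E}"
  proof (intro set_eqI iffI)
    fix Z assume "Z \<in> subface A ?W ?R"
    then obtain Y where Y: "Y \<in> A" "Y \<inter> ?W = ?R" "Z = Y - ?W" unfolding subface_def by blast
    have "Y \<subseteq> U" using Y U by auto
    then have "Y - E = P - E" using Y(2) PU by auto
    then have "Y = P \<or> Y = Q" using only Y(1) by blast
    then show "Z \<in> {P \<inter> E, Q \<inter> E}" using Y(3) PU by auto
  next
    fix Z assume "Z \<in> {P \<inter> E, Q \<inter> E}"
    moreover have "Q - E = P - E" using E(1) by auto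
    ultimately have "Z = P - ?W \<and> P \<inter> ?W = ?R \<or> Z = Q - ?W \<and> Q \<inter> ?W = ?R"
      using PU by auto
    then show "Z \<in> subface A ?W ?R"
      unfolding subface_def using PQ by blast
  qed
  have "s_extremal {P \<inter> E, Q \<inter> E}"
    using s_extremal_subface[OF U ext, of ?W ?R] PU subface_eq by auto
  moreover have "P \<inter> E \<noteq> Q \<inter> E"
  proof
    assume "P \<inter> E = Q \<inter> E"
    then have "E = {}" using E(1) by auto
    then show False using E(2) by simp
  qed
  moreover have "finite E" using EU U(1) finite_subset by blast
  ultimately show False
    using Suc_card_le_card_Sh_pair[OF _ E(1)] E(2) unfolding s_extremal_def by simp
qed

lemma s_extremal_insert:
  assumes U: "finite U" "F \<subseteq> Pow U" and ext: "s_extremal F"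
    and X: "X \<subseteq> U" "X \<notin> F"
    and new: "\<And>T. T \<in> Sh (insert X F) \<Longrightarrow> T \<notin> Sh F \<Longrightarrow> T = T0"
  shows "s_extremal (insert X F)"
proof -
  have finF: "finite F" using U by (meson finite_Pow_iff finite_subset)
  have "Sh (insert X F) \<subseteq> insert T0 (Sh F)" using new by blast
  then have "card (Sh (insert X F)) \<le> card (insert T0 (Sh F))"
    using finite_Sh[OF U] by (simp add: card_mono)
  also have "\<dots> \<le> Suc (card (Sh F))" by (simp add: card_insert_le_m1)
  also have "\<dots> = card (insert X F)" using ext X(2) finF unfolding s_extremal_def by simp
  finally show ?thesis
    using card_le_card_Sh[of U "insert X F"] U X unfolding s_extremal_def by simp
qed

section \<open>Systems of subcubes\<close>

text \<open>A pair \<open>(S, H)\<close> with \<open>H \<subseteq> S \<subseteq> U\<close> stands for the subcube \<open>cube U S H\<close> of \<open>Pow U\<close>; a system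
  \<open>C\<close> of such pairs encodes the Sperner family \<open>fst ` C\<close> together with the map \<open>h\<close>, and
  \<open>uncovered U C\<close> is the family \<open>F(S, h)\<close>.\<close>

definition cube :: "nat set \<Rightarrow> nat set \<Rightarrow> nat set \<Rightarrow> nat set set" where
  "cube U S H = {X. X \<subseteq> U \<and> X \<inter> S = H}"

definition covered :: "nat set \<Rightarrow> (nat set \<times> nat set) set \<Rightarrow> nat set set" where
  "covered U C = (\<Union>p\<in>C. cube U (fst p) (snd p))"

definition uncovered :: "nat set \<Rightarrow> (nat set \<times> nat set) set \<Rightarrow> nat set set" where
  "uncovered U C = Pow U - covered U C"

definition cube_system :: "nat set \<Rightarrow> (nat set \<times> nat set) set \<Rightarrow> bool" where
  "cube_system U C \<longleftrightarrow> finite U \<and> (\<forall>p\<in>C. snd p \<subseteq> fst p \<and> fst p \<subseteq> U) \<and>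
     (\<forall>p\<in>C. \<forall>q\<in>C. fst p \<subseteq> fst q \<longrightarrow> p = q)"

definition flip :: "nat set \<Rightarrow> nat \<Rightarrow> nat set" where
  "flip X a = (if a \<in> X then X - {a} else insert a X)"

text \<open>A system is saturated if no point of a cube \<open>p\<close> has all its neighbours in the fixed
  directions \<open>fst p\<close> uncovered; such a point could be uncovered without creating more than
  one new shattered set.\<close>

definition saturated :: "nat set \<Rightarrow> (nat set \<times> nat set) set \<Rightarrow> bool" where
  "saturated U C \<longleftrightarrow> (\<forall>p\<in>C. \<forall>X\<in>cube U (fst p) (snd p). \<exists>a\<in>fst p. flip X a \<in> covered U C)"

definition critical :: "(nat set \<times> nat set) set \<Rightarrow> nat \<Rightarrow> bool" where
  "critical C c \<longleftrightarrow> (\<exists>p\<in>C. \<exists>q\<in>C. fst p - fst q = {c})"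

definition conflicting :: "(nat set \<times> nat set) set \<Rightarrow> nat \<Rightarrow> bool" where
  "conflicting C c \<longleftrightarrow> (\<exists>p\<in>C. \<exists>q\<in>C. c \<in> fst p \<and> c \<in> fst q \<and> c \<in> snd p \<and> c \<notin> snd q)"

lemma cube_iff: "H \<subseteq> S \<Longrightarrow> X \<in> cube U S H \<longleftrightarrow> X \<subseteq> U \<and> (\<forall>u\<in>S. u \<in> X \<longleftrightarrow> u \<in> H)"
  unfolding cube_def by blast

lemma flip_mem: "b \<in> flip X a \<longleftrightarrow> (if b = a then a \<notin> X else b \<in> X)"
  unfolding flip_def by auto

lemma flip_subset: "X \<subseteq> U \<Longrightarrow> a \<in> U \<Longrightarrow> flip X a \<subseteq> U"
  unfolding flip_def by auto

lemma uncovered_subset_Pow: "uncovered U C \<subseteq> Pow U"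
  unfolding uncovered_def by auto

lemma cube_systemD:
  assumes "cube_system U C"
  shows "finite U" "p \<in> C \<Longrightarrow> snd p \<subseteq> fst p" "p \<in> C \<Longrightarrow> fst p \<subseteq> U"
    "p \<in> C \<Longrightarrow> q \<in> C \<Longrightarrow> fst p \<subseteq> fst q \<Longrightarrow> p = q"
  using assms unfolding cube_system_def by auto

lemma finite_cube_system:
  assumes "cube_system U C"
  shows "finite C"
proof -
  have "C \<subseteq> Pow U \<times> Pow U"
    using cube_systemD(2,3)[OF assms] by force
  then show ?thesis using cube_systemD(1)[OF assms]
    by (meson finite_Pow_iff finite_SigmaI finite_subset)
qed

definition drop_coord :: "nat \<Rightarrow> (nat set \<times> nat set) set \<Rightarrow> (nat set \<times> nat set) set" where
  "drop_coord c C = (\<lambda>p. (fst p - {c}, snd p - {c})) ` C"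

lemma cube_system_drop_coord:
  assumes "cube_system U C" "\<not> critical C c"
  shows "cube_system (U - {c}) (drop_coord c C)"
proof -
  have "\<forall>p'\<in>drop_coord c C. snd p' \<subseteq> fst p' \<and> fst p' \<subseteq> U - {c}"
  proof
    fix p' assume "p' \<in> drop_coord c C"
    then obtain p where "p \<in> C" "p' = (fst p - {c}, snd p - {c})" unfolding drop_coord_def by auto
    then show "snd p' \<subseteq> fst p' \<and> fst p' \<subseteq> U - {c}"
      using cube_systemD(2,3)[OF assms(1), of p] by auto
  qed
  moreover have "\<forall>p'\<in>drop_coord c C. \<forall>q'\<in>drop_coord c C. fst p' \<subseteq> fst q' \<longrightarrow> p' = q'"
  proof (intro ballI impI)
    fix p' q' assume "p' \<in> drop_coord c C" "q' \<in> drop_coord c C" and sub: "fst p' \<subseteq> fst q'"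
    then obtain p q where pq: "p \<in> C" "q \<in> C" "p' = (fst p - {c}, snd p - {c})"
        "q' = (fst q - {c}, snd q - {c})"
      unfolding drop_coord_def by auto
    then have "fst p - fst q \<subseteq> {c}" using sub by auto
    then have "fst p - fst q = {}" using assms(2) pq unfolding critical_def by blast
    then have "p = q" using cube_systemD(4)[OF assms(1) pq(1,2)] by blast
    then show "p' = q'" using pq by simp
  qed
  ultimately show ?thesis using cube_systemD(1)[OF assms(1)] unfolding cube_system_def by simp
qed

lemma covered_drop_coord_iff:
  assumes "cube_system U C" "c \<in> U" "Y \<subseteq> U - {c}"
  shows "Y \<in> covered (U - {c}) (drop_coord c C) \<longleftrightarrow> Y \<in> covered U C \<or> insert c Y \<in> covered U C"
proof
  assume "Y \<in> covered (U - {c}) (drop_coord c C)"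
  then obtain p where p: "p \<in> C" "Y \<inter> (fst p - {c}) = snd p - {c}"
    unfolding covered_def drop_coord_def cube_def by auto
  have H: "snd p \<subseteq> fst p" using cube_systemD(2)[OF assms(1) p(1)] .
  show "Y \<in> covered U C \<or> insert c Y \<in> covered U C"
  proof (cases "c \<in> snd p")
    case True
    then have "insert c Y \<in> cube U (fst p) (snd p)" using p H assms(2,3) unfolding cube_def by auto
    then show ?thesis using p(1) unfolding covered_def by blast
  next
    case False
    then have "Y \<in> cube U (fst p) (snd p)" using p H assms(3) unfolding cube_def by auto
    then show ?thesis using p(1) unfolding covered_def by blast
  qed
next
  assume "Y \<in> covered U C \<or> insert c Y \<in> covered U C"
  then obtain p Z where p: "p \<in> C" "Z \<inter> fst p = snd p" "Z = Y \<or> Z = insert c Y"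
    unfolding covered_def cube_def by blast
  then have "Y \<in> cube (U - {c}) (fst p - {c}) (snd p - {c})" using assms(3) unfolding cube_def
    by auto
  then show "Y \<in> covered (U - {c}) (drop_coord c C)"
    using p(1) unfolding covered_def drop_coord_def by force
qed

lemma uncovered_drop_coord:
  assumes "cube_system U C" "c \<in> U"
  shows "uncovered (U - {c}) (drop_coord c C) = reduct (uncovered U C) c"
proof (intro set_eqI iffI)
  fix Y assume "Y \<in> uncovered (U - {c}) (drop_coord c C)"
  then have "Y \<subseteq> U - {c}" "Y \<notin> covered (U - {c}) (drop_coord c C)" unfolding uncovered_def by auto
  then show "Y \<in> reduct (uncovered U C) c"
    using covered_drop_coord_iff[OF assms] assms(2) unfolding reduct_def uncovered_def by auto
next
  fix Y assume "Y \<in> reduct (uncovered U C) c"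
  then have "Y \<subseteq> U - {c}" "Y \<notin> covered U C" "insert c Y \<notin> covered U C"
    unfolding reduct_def uncovered_def by auto
  then show "Y \<in> uncovered (U - {c}) (drop_coord c C)"
    using covered_drop_coord_iff[OF assms] unfolding uncovered_def by auto
qed

text \<open>A point \<open>X'\<close> of a reduced cube lifts to a point \<open>X\<close> of the original cube, which has a
  covered neighbour \<open>flip X a\<close>. If \<open>a \<noteq> c\<close> this neighbour projects to a covered neighbour of
  \<open>X'\<close>. If \<open>a = c\<close>, the cube \<open>q\<close> covering \<open>flip X c\<close> differs from \<open>p\<close>, and since \<open>c\<close> is
  not critical \<open>p\<close> fixes a coordinate \<open>b \<noteq> c\<close> that \<open>q\<close> leaves free; then \<open>flip X' b\<close> lies in
  the reduced cube of \<open>q\<close>.\<close>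

lemma saturated_drop_coord:
  assumes wf: "cube_system U C" and c: "c \<in> U" "\<not> critical C c" and sat: "saturated U C"
  shows "saturated (U - {c}) (drop_coord c C)"
  unfolding saturated_def
proof (intro ballI)
  fix p' X' assume p': "p' \<in> drop_coord c C" and X': "X' \<in> cube (U - {c}) (fst p') (snd p')"
  then obtain p where p: "p \<in> C" "p' = (fst p - {c}, snd p - {c})" unfolding drop_coord_def by auto
  note pw = cube_systemD(2,3)[OF wf p(1)]
  have X'U: "X' \<subseteq> U - {c}" and X'S: "X' \<inter> (fst p - {c}) = snd p - {c}"
    using X' p unfolding cube_def by auto
  define X where "X = (if c \<in> snd p then insert c X' else X')"
  have XU: "X \<subseteq> U" using X'U c(1) unfolding X_def by auto
  have XS: "X \<inter> fst p = snd p" using X'S pw X'U unfolding X_def by auto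
  have X'eq: "X - {c} = X'" using X'U unfolding X_def by auto
  obtain a where a: "a \<in> fst p" "flip X a \<in> covered U C"
    using sat p(1) XU XS unfolding saturated_def cube_def by blast
  obtain q where q: "q \<in> C" "flip X a \<in> cube U (fst q) (snd q)" using a(2) unfolding covered_def
    by auto
  show "\<exists>a\<in>fst p'. flip X' a \<in> covered (U - {c}) (drop_coord c C)"
  proof (cases "a = c")
    case False
    have "flip X a \<subseteq> U" using flip_subset[OF XU, of a] a pw by auto
    then have "flip X' a \<subseteq> U - {c}" "flip X a = flip X' a \<or> flip X a = insert c (flip X' a)"
      using False X'eq X'U unfolding flip_def by auto
    then have "flip X' a \<in> covered U C \<or> insert c (flip X' a) \<in> covered U C"
      using a(2) by auto
    then have "flip X' a \<in> covered (U - {c}) (drop_coord c C)"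
      using covered_drop_coord_iff[OF wf c(1) \<open>flip X' a \<subseteq> U - {c}\<close>] by blast
    then show ?thesis using a(1) False p(2) by auto
  next
    case True
    have "q \<noteq> p"
    proof
      assume "q = p"
      then have "flip X c \<inter> fst p = snd p" using q True unfolding cube_def by auto
      then show False using XS a(1) True unfolding flip_def by (auto split: if_splits)
    qed
    then have "\<not> fst p \<subseteq> fst q" using cube_systemD(4)[OF wf p(1) q(1)] by blast
    moreover have "fst p - fst q \<noteq> {c}" using c(2) p(1) q(1) unfolding critical_def by blast
    ultimately obtain b where b: "b \<in> fst p" "b \<notin> fst q" "b \<noteq> c" by blast
    have "flip X c \<inter> fst q = snd q" using q True unfolding cube_def by auto
    moreover have "flip X c - {c} = X'" using X'eq unfolding flip_def by auto
    ultimately have "X' \<inter> (fst q - {c}) = snd q - {c}" by blast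
    then have "flip X' b \<inter> (fst q - {c}) = snd q - {c}" using b unfolding flip_def by auto
    moreover have "flip X' b \<subseteq> U - {c}" using flip_subset[OF X'U, of b] b pw by auto
    ultimately have "flip X' b \<in> cube (U - {c}) (fst q - {c}) (snd q - {c})" unfolding cube_def
      by auto
    then have "flip X' b \<in> covered (U - {c}) (drop_coord c C)"
      using q(1) unfolding covered_def drop_coord_def by force
    then show ?thesis using b p(2) by auto
  qed
qed

definition cubes_avoiding :: "nat \<Rightarrow> (nat set \<times> nat set) set \<Rightarrow> (nat set \<times> nat set) set" where
  "cubes_avoiding c C = {p \<in> C. c \<notin> fst p}"

lemma cube_system_cubes_avoiding:
  assumes "cube_system U C"
  shows "cube_system (U - {c}) (cubes_avoiding c C)"
  using assms unfolding cube_system_def cubes_avoiding_def by blast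

text \<open>If \<open>c\<close> is not conflicting, all cubes fixing \<open>c\<close> put it on the same side; a set \<open>L\<close> on the
  other side is covered exactly when its trace \<open>L - {c}\<close> is covered by a cube not fixing \<open>c\<close>.\<close>

lemma covered_cubes_avoiding_iff:
  assumes "c \<in> U" "L \<subseteq> U"
    and side: "\<And>p. p \<in> C \<Longrightarrow> c \<in> fst p \<Longrightarrow> c \<in> snd p \<longleftrightarrow> c \<notin> L"
  shows "L - {c} \<in> covered (U - {c}) (cubes_avoiding c C) \<longleftrightarrow> L \<in> covered U C"
proof
  assume "L - {c} \<in> covered (U - {c}) (cubes_avoiding c C)"
  then obtain p where p: "p \<in> C" "c \<notin> fst p" "(L - {c}) \<inter> fst p = snd p"
    unfolding covered_def cubes_avoiding_def cube_def by auto
  then have "L \<inter> fst p = snd p" by auto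
  then show "L \<in> covered U C" using p(1) assms(2) unfolding covered_def cube_def by blast
next
  assume "L \<in> covered U C"
  then obtain p where p: "p \<in> C" "L \<inter> fst p = snd p" unfolding covered_def cube_def by auto
  have "c \<notin> fst p"
  proof
    assume "c \<in> fst p"
    then show False using side[OF p(1)] p(2) by auto
  qed
  then have "L - {c} \<in> cube (U - {c}) (fst p) (snd p)" "p \<in> cubes_avoiding c C"
    using p assms(2) unfolding cube_def cubes_avoiding_def by auto
  then show "L - {c} \<in> covered (U - {c}) (cubes_avoiding c C)" unfolding covered_def by blast
qed

lemma uncovered_cubes_avoiding:
  assumes "c \<in> U" and nc: "\<not> conflicting C c"
  shows "uncovered (U - {c}) (cubes_avoiding c C) =
    (if \<exists>p\<in>C. c \<in> fst p \<and> c \<notin> snd p then upper_face (uncovered U C) c else lower_face (uncovered U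
      C) c)"
    (is "_ = (if ?v then _ else _)")
proof -
  have side: "\<And>p L. p \<in> C \<Longrightarrow> c \<in> fst p \<Longrightarrow> c \<in> L \<longleftrightarrow> ?v \<Longrightarrow> c \<in> snd p \<longleftrightarrow> c \<notin> L"
    using nc unfolding conflicting_def by blast
  have covered_iff: "Y \<in> covered (U - {c}) (cubes_avoiding c C) \<longleftrightarrow> L \<in> covered U C"
    if "Y \<subseteq> U - {c}" "L = (if ?v then insert c Y else Y)" for Y L
  proof -
    have L: "L \<subseteq> U" "L - {c} = Y" "c \<in> L \<longleftrightarrow> ?v" using that assms(1) by auto
    then have "\<And>p. p \<in> C \<Longrightarrow> c \<in> fst p \<Longrightarrow> c \<in> snd p \<longleftrightarrow> c \<notin> L" using side by blast
    from covered_cubes_avoiding_iff[OF assms(1) L(1) this] show ?thesis using L(2) by simp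
  qed
  show ?thesis
  proof (cases ?v)
    case True
    have "uncovered (U - {c}) (cubes_avoiding c C) = upper_face (uncovered U C) c"
    proof (intro set_eqI iffI)
      fix Y assume "Y \<in> uncovered (U - {c}) (cubes_avoiding c C)"
      then have Y: "Y \<subseteq> U - {c}" "Y \<notin> covered (U - {c}) (cubes_avoiding c C)"
        unfolding uncovered_def by auto
      then have "insert c Y \<in> uncovered U C" "Y = insert c Y - {c}"
        using covered_iff[OF Y(1)] True assms(1) unfolding uncovered_def by auto
      then show "Y \<in> upper_face (uncovered U C) c" unfolding upper_face_def by blast
    next
      fix Y assume "Y \<in> upper_face (uncovered U C) c"
      then obtain Z where Z: "Z \<in> uncovered U C" "c \<in> Z" "Y = Z - {c}" unfolding upper_face_def
        by auto
      then have "Y \<subseteq> U - {c}" "Z = insert c Y" unfolding uncovered_def by auto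
      then show "Y \<in> uncovered (U - {c}) (cubes_avoiding c C)"
        using covered_iff True Z(1) unfolding uncovered_def by auto
    qed
    then show ?thesis using True by simp
  next
    case False
    have "uncovered (U - {c}) (cubes_avoiding c C) = lower_face (uncovered U C) c"
    proof (intro set_eqI iffI)
      fix Y assume "Y \<in> uncovered (U - {c}) (cubes_avoiding c C)"
      then have Y: "Y \<subseteq> U - {c}" "Y \<notin> covered (U - {c}) (cubes_avoiding c C)"
        unfolding uncovered_def by auto
      then show "Y \<in> lower_face (uncovered U C) c"
        using covered_iff[OF Y(1)] False unfolding uncovered_def lower_face_def by auto
    next
      fix Y assume "Y \<in> lower_face (uncovered U C) c"
      then have Y: "Y \<subseteq> U - {c}" "Y \<notin> covered U C" unfolding uncovered_def lower_face_def by auto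
      then show "Y \<in> uncovered (U - {c}) (cubes_avoiding c C)"
        using covered_iff[OF Y(1)] False unfolding uncovered_def by auto
    qed
    then show ?thesis using False by (simp only: if_False)
  qed
qed

lemma saturated_cubes_avoiding:
  assumes wf: "cube_system U C" and c: "c \<in> U" "\<not> conflicting C c" and sat: "saturated U C"
  shows "saturated (U - {c}) (cubes_avoiding c C)"
  unfolding saturated_def
proof (intro ballI)
  fix p X' assume p: "p \<in> cubes_avoiding c C" and X': "X' \<in> cube (U - {c}) (fst p) (snd p)"
  have pC: "p \<in> C" and cp: "c \<notin> fst p" using p unfolding cubes_avoiding_def by auto
  define v where "v \<longleftrightarrow> (\<exists>p\<in>C. c \<in> fst p \<and> c \<notin> snd p)"
  have fixed_side: "\<And>q. q \<in> C \<Longrightarrow> c \<in> fst q \<Longrightarrow> c \<in> snd q \<longleftrightarrow> \<not> v"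
    using c(2) unfolding conflicting_def v_def by blast
  define lift where "lift Y = (if v then insert c Y else Y)" for Y
  have X'U: "X' \<subseteq> U - {c}" and X'S: "X' \<inter> fst p = snd p" using X' unfolding cube_def by auto
  have "lift X' \<in> cube U (fst p) (snd p)" using X'U X'S cp c(1) unfolding lift_def cube_def by auto
  then obtain a where a: "a \<in> fst p" "flip (lift X') a \<in> covered U C"
    using sat pC unfolding saturated_def by blast
  have "a \<noteq> c" using a cp by auto
  then have "flip (lift X') a = lift (flip X' a)" unfolding lift_def flip_def by auto
  moreover have Y: "flip X' a \<subseteq> U - {c}"
    using flip_subset[OF X'U, of a] a(1) \<open>a \<noteq> c\<close> cube_systemD(3)[OF wf pC] by auto
  moreover have L: "lift (flip X' a) \<subseteq> U" "lift (flip X' a) - {c} = flip X' a"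
    "c \<in> lift (flip X' a) \<longleftrightarrow> v"
    using Y c(1) unfolding lift_def by auto
  moreover have "\<And>q. q \<in> C \<Longrightarrow> c \<in> fst q \<Longrightarrow> c \<in> snd q \<longleftrightarrow> c \<notin> lift (flip X' a)"
    using fixed_side L(3) by blast
  ultimately have "flip X' a \<in> covered (U - {c}) (cubes_avoiding c C)"
    using covered_cubes_avoiding_iff[OF c(1) L(1)] a(2) by simp
  then show "\<exists>a\<in>fst p. flip X' a \<in> covered (U - {c}) (cubes_avoiding c C)" using a(1) by blast
qed
lemma set_eq_on: "Z \<subseteq> U \<Longrightarrow> P \<subseteq> U \<Longrightarrow> Z = P \<longleftrightarrow> (\<forall>u\<in>U. u \<in> Z \<longleftrightarrow> u \<in> P)"
  by blast

section \<open>Configurations that are not s-extremal\<close>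

text \<open>Four configurations without extremality, named after the free sets \<open>U - fst p\<close> of the cubes:
  three singletons, four pairs forming a cycle, three pairs forming a triangle plus a singleton,
  and four singletons. In each one exhibits two uncovered sets isolated in the sense of
  not_s_extremal_isolated_pair.\<close>

lemma not_s_extremal_three_points:
  assumes d: "b1 \<noteq> b2" "b1 \<noteq> b3" "b2 \<noteq> b3" and U: "U = {b1,b2,b3}" and C: "C = {p1,p2,p3}"
    and S: "fst p1 = {b2,b3}" "fst p2 = {b1,b3}" "fst p3 = {b1,b2}"
    and H: "snd p1 \<subseteq> fst p1" "snd p2 \<subseteq> fst p2" "snd p3 \<subseteq> fst p3"
    and c1: "b1 \<in> snd p2 \<longleftrightarrow> b1 \<notin> snd p3"
    and c2: "b2 \<in> snd p1 \<longleftrightarrow> b2 \<notin> snd p3"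
    and c3: "b3 \<in> snd p1 \<longleftrightarrow> b3 \<notin> snd p2"
  shows "\<not> s_extremal (uncovered U C)"
proof -
  define P where "P = (if b1 \<in> snd p2 then {b1} else {}) \<union> (if b2 \<in> snd p3 then {b2} else {}) \<union>
    (if b3 \<in> snd p1 then {b3} else {})"
  define Q where "Q = U - P"
  have PU: "P \<subseteq> U" and QU: "Q \<subseteq> U" unfolding P_def Q_def U by auto
  have mem: "\<And>Z. Z \<subseteq> U \<Longrightarrow> Z \<in> covered U C \<longleftrightarrow>
      ((b2 \<in> Z \<longleftrightarrow> b2 \<in> snd p1) \<and> (b3 \<in> Z \<longleftrightarrow> b3 \<in> snd p1)) \<or>
      ((b1 \<in> Z \<longleftrightarrow> b1 \<in> snd p2) \<and> (b3 \<in> Z \<longleftrightarrow> b3 \<in> snd p2)) \<or>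
      ((b1 \<in> Z \<longleftrightarrow> b1 \<in> snd p3) \<and> (b2 \<in> Z \<longleftrightarrow> b2 \<in> snd p3))"
    unfolding covered_def C using cube_iff[OF H(1)] cube_iff[OF H(2)] cube_iff[OF H(3)] S by auto
  have Pm: "b1 \<in> P \<longleftrightarrow> b1 \<in> snd p2" "b2 \<in> P \<longleftrightarrow> b2 \<in> snd p3" "b3 \<in> P \<longleftrightarrow> b3 \<in> snd p1"
    unfolding P_def using d by auto
  have Qm: "b1 \<in> Q \<longleftrightarrow> b1 \<notin> snd p2" "b2 \<in> Q \<longleftrightarrow> b2 \<notin> snd p3" "b3 \<in> Q \<longleftrightarrow> b3 \<notin> snd p1"
    unfolding Q_def using Pm U by auto
  have PF: "P \<in> uncovered U C" unfolding uncovered_def using mem[OF PU] PU Pm c1 c2 c3 by auto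
  have QF: "Q \<in> uncovered U C" unfolding uncovered_def using mem[OF QU] QU Qm c1 c2 c3 by auto
  have E: "U = (P - Q) \<union> (Q - P)" unfolding Q_def using PU by auto
  have only: "Z = P \<or> Z = Q" if "Z \<in> uncovered U C" for Z
  proof -
    have Z: "Z \<subseteq> U" "Z \<notin> covered U C" using that unfolding uncovered_def by auto
    have nG: "\<not> (((b2 \<in> Z \<longleftrightarrow> b2 \<in> snd p1) \<and> (b3 \<in> Z \<longleftrightarrow> b3 \<in> snd p1)) \<or>
      ((b1 \<in> Z \<longleftrightarrow> b1 \<in> snd p2) \<and> (b3 \<in> Z \<longleftrightarrow> b3 \<in> snd p2)) \<or>
      ((b1 \<in> Z \<longleftrightarrow> b1 \<in> snd p3) \<and> (b2 \<in> Z \<longleftrightarrow> b2 \<in> snd p3)))"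
      using Z(2) mem[OF Z(1)] by simp
    have "((b1 \<in> Z \<longleftrightarrow> b1 \<in> P) \<and> (b2 \<in> Z \<longleftrightarrow> b2 \<in> P) \<and> (b3 \<in> Z \<longleftrightarrow> b3 \<in> P)) \<or>
          ((b1 \<in> Z \<longleftrightarrow> b1 \<in> Q) \<and> (b2 \<in> Z \<longleftrightarrow> b2 \<in> Q) \<and> (b3 \<in> Z \<longleftrightarrow> b3 \<in> Q))"
      unfolding Pm Qm using nG c1 c2 c3 by argo
    then have "(\<forall>u\<in>U. u \<in> Z \<longleftrightarrow> u \<in> P) \<or> (\<forall>u\<in>U. u \<in> Z \<longleftrightarrow> u \<in> Q)"
      unfolding U by simp
    then show ?thesis using set_eq_on[OF Z(1) PU] set_eq_on[OF Z(1) QU] by blast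
  qed
  have "card U = 3" using d U by simp
  have finU: "finite U" using U by simp
  have FFs: "uncovered U C \<subseteq> Pow U" unfolding uncovered_def by auto
  show ?thesis
    by (rule not_s_extremal_isolated_pair[OF finU FFs PF QF E]) (use only \<open>card U = 3\<close> in auto)
qed

lemma not_s_extremal_four_cycle:
  assumes d: "w \<noteq> x" "w \<noteq> y" "w \<noteq> z" "x \<noteq> y" "x \<noteq> z" "y \<noteq> z"
    and U: "U = {w,x,y,z}" and C: "C = {c1,c2,c3,c4}"
    and S: "fst c1 = {y,z}" "fst c2 = {z,w}" "fst c3 = {w,x}" "fst c4 = {x,y}"
    and H: "snd c1 \<subseteq> fst c1" "snd c2 \<subseteq> fst c2" "snd c3 \<subseteq> fst c3" "snd c4 \<subseteq> fst c4"
    and cw: "w \<in> snd c2 \<longleftrightarrow> w \<notin> snd c3"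
    and cx: "x \<in> snd c3 \<longleftrightarrow> x \<notin> snd c4"
    and cy: "y \<in> snd c4 \<longleftrightarrow> y \<notin> snd c1"
    and cz: "z \<in> snd c1 \<longleftrightarrow> z \<notin> snd c2"
  shows "\<not> s_extremal (uncovered U C)"
proof -
  define P where "P = (if y \<in> snd c4 then {y} else {}) \<union> (if x \<in> snd c3 then {x} else {}) \<union>
    (if w \<in> snd c2 then {w} else {}) \<union> (if z \<in> snd c1 then {z} else {})"
  define Q where "Q = U - P"
  have PU: "P \<subseteq> U" and QU: "Q \<subseteq> U" unfolding P_def Q_def U by auto
  have mem: "\<And>Z. Z \<subseteq> U \<Longrightarrow> Z \<in> covered U C \<longleftrightarrow>
      ((y \<in> Z \<longleftrightarrow> y \<in> snd c1) \<and> (z \<in> Z \<longleftrightarrow> z \<in> snd c1)) \<or>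
      ((z \<in> Z \<longleftrightarrow> z \<in> snd c2) \<and> (w \<in> Z \<longleftrightarrow> w \<in> snd c2)) \<or>
      ((w \<in> Z \<longleftrightarrow> w \<in> snd c3) \<and> (x \<in> Z \<longleftrightarrow> x \<in> snd c3)) \<or>
      ((x \<in> Z \<longleftrightarrow> x \<in> snd c4) \<and> (y \<in> Z \<longleftrightarrow> y \<in> snd c4))"
    unfolding covered_def C
      using cube_iff[OF H(1)] cube_iff[OF H(2)] cube_iff[OF H(3)] cube_iff[OF H(4)] S by auto
  have Pm: "y \<in> P \<longleftrightarrow> y \<in> snd c4" "x \<in> P \<longleftrightarrow> x \<in> snd c3" "w \<in> P \<longleftrightarrow> w \<in> snd c2" "z \<in> P \<longleftrightarrow> z \<in> snd c1"
    unfolding P_def using d by auto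
  have Qm: "y \<in> Q \<longleftrightarrow> y \<notin> snd c4" "x \<in> Q \<longleftrightarrow> x \<notin> snd c3" "w \<in> Q \<longleftrightarrow> w \<notin> snd c2" "z \<in> Q \<longleftrightarrow> z \<notin> snd c1"
    unfolding Q_def using Pm U by auto
  have PF: "P \<in> uncovered U C" unfolding uncovered_def using mem[OF PU] PU Pm cw cx cy cz by auto
  have QF: "Q \<in> uncovered U C" unfolding uncovered_def using mem[OF QU] QU Qm cw cx cy cz by auto
  have E: "U = (P - Q) \<union> (Q - P)" unfolding Q_def using PU by auto
  have only: "Z = P \<or> Z = Q" if "Z \<in> uncovered U C" for Z
  proof -
    have Z: "Z \<subseteq> U" "Z \<notin> covered U C" using that unfolding uncovered_def by auto
    have nG: "\<not> (((y \<in> Z \<longleftrightarrow> y \<in> snd c1) \<and> (z \<in> Z \<longleftrightarrow> z \<in> snd c1)) \<or>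
      ((z \<in> Z \<longleftrightarrow> z \<in> snd c2) \<and> (w \<in> Z \<longleftrightarrow> w \<in> snd c2)) \<or>
      ((w \<in> Z \<longleftrightarrow> w \<in> snd c3) \<and> (x \<in> Z \<longleftrightarrow> x \<in> snd c3)) \<or>
      ((x \<in> Z \<longleftrightarrow> x \<in> snd c4) \<and> (y \<in> Z \<longleftrightarrow> y \<in> snd c4)))"
      using Z(2) mem[OF Z(1)] by simp
    have "((w \<in> Z \<longleftrightarrow> w \<in> P) \<and> (x \<in> Z \<longleftrightarrow> x \<in> P) \<and> (y \<in> Z \<longleftrightarrow> y \<in> P) \<and> (z \<in> Z \<longleftrightarrow> z \<in> P)) \<or>
          ((w \<in> Z \<longleftrightarrow> w \<in> Q) \<and> (x \<in> Z \<longleftrightarrow> x \<in> Q) \<and> (y \<in> Z \<longleftrightarrow> y \<in> Q) \<and> (z \<in> Z \<longleftrightarrow> z \<in> Q))"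
      unfolding Pm Qm using nG cw cx cy cz by argo
    then have "(\<forall>u\<in>U. u \<in> Z \<longleftrightarrow> u \<in> P) \<or> (\<forall>u\<in>U. u \<in> Z \<longleftrightarrow> u \<in> Q)"
      unfolding U by simp
    then show ?thesis using set_eq_on[OF Z(1) PU] set_eq_on[OF Z(1) QU] by blast
  qed
  have "card U = 4" using d U by simp
  have finU: "finite U" using U by simp
  have FFs: "uncovered U C \<subseteq> Pow U" unfolding uncovered_def by auto
  show ?thesis
    by (rule not_s_extremal_isolated_pair[OF finU FFs PF QF E]) (use only \<open>card U = 4\<close> in auto)
qed

lemma not_s_extremal_triangle_point:
  assumes d: "s \<noteq> t" "s \<noteq> r" "s \<noteq> d" "t \<noteq> r" "t \<noteq> d" "r \<noteq> d"
    and U: "U = {s,t,r,d}" and C: "C = {pk,pi,pj,a}"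
    and S: "fst pk = {r,d}" "fst pi = {s,d}" "fst pj = {t,d}" "fst a = {s,t,r}"
    and H: "snd pk \<subseteq> fst pk" "snd pi \<subseteq> fst pi" "snd pj \<subseteq> fst pj" "snd a \<subseteq> fst a"
    and cs: "s \<in> snd pi \<longleftrightarrow> s \<notin> snd a"
    and ct: "t \<in> snd pj \<longleftrightarrow> t \<notin> snd a"
    and cr: "r \<in> snd pk \<longleftrightarrow> r \<notin> snd a"
    and cd: "d \<in> snd pi \<longleftrightarrow> d \<notin> snd pj"
  shows "\<not> s_extremal (uncovered U C)"
proof -
  define P where "P = (if s \<in> snd a then {s} else {}) \<union> (if t \<in> snd a then {} else {t}) \<union>
    (if d \<in> snd pi then {d} else {}) \<union> (if r \<in> snd a then {r} else {})"
  define Q where "Q = (if s \<in> snd a then {} else {s}) \<union> (if t \<in> snd a then {t} else {}) \<union>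
    (if d \<in> snd pi then {} else {d}) \<union> (if r \<in> snd a then {r} else {})"
  have PU: "P \<subseteq> U" and QU: "Q \<subseteq> U" unfolding P_def Q_def U by auto
  have mem: "\<And>Z. Z \<subseteq> U \<Longrightarrow> Z \<in> covered U C \<longleftrightarrow>
      ((r \<in> Z \<longleftrightarrow> r \<in> snd pk) \<and> (d \<in> Z \<longleftrightarrow> d \<in> snd pk)) \<or>
      ((s \<in> Z \<longleftrightarrow> s \<in> snd pi) \<and> (d \<in> Z \<longleftrightarrow> d \<in> snd pi)) \<or>
      ((t \<in> Z \<longleftrightarrow> t \<in> snd pj) \<and> (d \<in> Z \<longleftrightarrow> d \<in> snd pj)) \<or>
      ((s \<in> Z \<longleftrightarrow> s \<in> snd a) \<and> (t \<in> Z \<longleftrightarrow> t \<in> snd a) \<and> (r \<in> Z \<longleftrightarrow> r \<in> snd a))"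
    unfolding covered_def C
      using cube_iff[OF H(1)] cube_iff[OF H(2)] cube_iff[OF H(3)] cube_iff[OF H(4)] S by auto
  have Pm: "s \<in> P \<longleftrightarrow> s \<in> snd a" "t \<in> P \<longleftrightarrow> t \<notin> snd a" "d \<in> P \<longleftrightarrow> d \<in> snd pi" "r \<in> P \<longleftrightarrow> r \<in> snd a"
    unfolding P_def using d by auto
  have Qm: "s \<in> Q \<longleftrightarrow> s \<notin> snd a" "t \<in> Q \<longleftrightarrow> t \<in> snd a" "d \<in> Q \<longleftrightarrow> d \<notin> snd pi" "r \<in> Q \<longleftrightarrow> r \<in> snd a"
    unfolding Q_def using d by auto
  have PF: "P \<in> uncovered U C" unfolding uncovered_def using mem[OF PU] PU Pm cs ct cr cd by auto
  have QF: "Q \<in> uncovered U C" unfolding uncovered_def using mem[OF QU] QU Qm cs ct cr cd by auto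
  have E: "{s,t,d} = (P - Q) \<union> (Q - P)"
  proof -
    have "(P - Q) \<union> (Q - P) \<subseteq> U" using PU QU by auto
    moreover have "r \<notin> (P - Q) \<union> (Q - P)" using Pm Qm by auto
    ultimately have 1: "(P - Q) \<union> (Q - P) \<subseteq> {s,t,d}" unfolding U by blast
    have "s \<in> (P - Q) \<union> (Q - P)" "t \<in> (P - Q) \<union> (Q - P)" "d \<in> (P - Q) \<union> (Q - P)" using Pm Qm by auto
    then have 2: "{s,t,d} \<subseteq> (P - Q) \<union> (Q - P)" by blast
    show ?thesis using 1 2 by (rule equalityI[rotated])
  qed
  have only: "Z = P \<or> Z = Q" if "Z \<in> uncovered U C" "Z - {s,t,d} = P - {s,t,d}" for Z
  proof -
    have Z: "Z \<subseteq> U" "Z \<notin> covered U C" using that unfolding uncovered_def by auto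
    have rZ: "r \<in> Z \<longleftrightarrow> r \<in> snd a" using that(2) Pm d by blast
    have nG: "\<not> (((r \<in> Z \<longleftrightarrow> r \<in> snd pk) \<and> (d \<in> Z \<longleftrightarrow> d \<in> snd pk)) \<or>
      ((s \<in> Z \<longleftrightarrow> s \<in> snd pi) \<and> (d \<in> Z \<longleftrightarrow> d \<in> snd pi)) \<or>
      ((t \<in> Z \<longleftrightarrow> t \<in> snd pj) \<and> (d \<in> Z \<longleftrightarrow> d \<in> snd pj)) \<or>
      ((s \<in> Z \<longleftrightarrow> s \<in> snd a) \<and> (t \<in> Z \<longleftrightarrow> t \<in> snd a) \<and> (r \<in> Z \<longleftrightarrow> r \<in> snd a)))"
      using Z(2) mem[OF Z(1)] by simp
    have "((s \<in> Z \<longleftrightarrow> s \<in> P) \<and> (t \<in> Z \<longleftrightarrow> t \<in> P) \<and> (r \<in> Z \<longleftrightarrow> r \<in> P) \<and> (d \<in> Z \<longleftrightarrow> d \<in> P)) \<or>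
          ((s \<in> Z \<longleftrightarrow> s \<in> Q) \<and> (t \<in> Z \<longleftrightarrow> t \<in> Q) \<and> (r \<in> Z \<longleftrightarrow> r \<in> Q) \<and> (d \<in> Z \<longleftrightarrow> d \<in> Q))"
      unfolding Pm Qm using nG rZ cs ct cr cd by argo
    then have "(\<forall>u\<in>U. u \<in> Z \<longleftrightarrow> u \<in> P) \<or> (\<forall>u\<in>U. u \<in> Z \<longleftrightarrow> u \<in> Q)"
      unfolding U by simp
    then show ?thesis using set_eq_on[OF Z(1) PU] set_eq_on[OF Z(1) QU] by blast
  qed
  have "card {s,t,d} = 3" using d by simp
  have finU: "finite U" using U by simp
  have FFs: "uncovered U C \<subseteq> Pow U" unfolding uncovered_def by auto
  show ?thesis
    by (rule not_s_extremal_isolated_pair[OF finU FFs PF QF E])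
      (use only \<open>card {s,t,d} = 3\<close> in auto)
qed

lemma not_s_extremal_four_points:
  assumes d: "bp \<noteq> bq" "bp \<noteq> br" "bp \<noteq> bs" "bq \<noteq> br" "bq \<noteq> bs" "br \<noteq> bs"
    and U: "U = {bp,bq,br,bs}" and C: "C = {p,q,r,s}"
    and S: "fst p = {bq,br,bs}" "fst q = {bp,br,bs}" "fst r = {bp,bq,bs}" "fst s = {bp,bq,br}"
    and H: "snd p \<subseteq> fst p" "snd q \<subseteq> fst q" "snd r \<subseteq> fst r" "snd s \<subseteq> fst s"
    and far: "br \<in> snd p \<longleftrightarrow> br \<notin> snd q" "bs \<in> snd p \<longleftrightarrow> bs \<notin> snd q"
    and av: "\<not> ((bp \<in> snd r \<longleftrightarrow> bp \<in> snd q) \<and> (bq \<in> snd r \<longleftrightarrow> bq \<in> snd p) \<and> (bs \<in> snd r \<longleftrightarrow> bs \<in> snd q))"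
      "\<not> ((bp \<in> snd s \<longleftrightarrow> bp \<in> snd q) \<and> (bq \<in> snd s \<longleftrightarrow> bq \<in> snd p) \<and> (br \<in> snd s \<longleftrightarrow> br \<in> snd p))"
      "\<not> ((bp \<in> snd r \<longleftrightarrow> bp \<in> snd q) \<and> (bq \<in> snd r \<longleftrightarrow> bq \<in> snd p) \<and> (bs \<in> snd r \<longleftrightarrow> bs \<in> snd p))"
      "\<not> ((bp \<in> snd s \<longleftrightarrow> bp \<in> snd q) \<and> (bq \<in> snd s \<longleftrightarrow> bq \<in> snd p) \<and> (br \<in> snd s \<longleftrightarrow> br \<in> snd q))"
  shows "\<not> s_extremal (uncovered U C)"
proof -
  define P where "P = (if bp \<in> snd q then {bp} else {}) \<union> (if bq \<in> snd p then {bq} else {}) \<union>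
    (if br \<in> snd p then {br} else {}) \<union> (if bs \<in> snd q then {bs} else {})"
  define Q where "Q = (if bp \<in> snd q then {bp} else {}) \<union> (if bq \<in> snd p then {bq} else {}) \<union>
    (if br \<in> snd q then {br} else {}) \<union> (if bs \<in> snd p then {bs} else {})"
  have PU: "P \<subseteq> U" and QU: "Q \<subseteq> U" unfolding P_def Q_def U by auto
  have mem: "\<And>Z. Z \<subseteq> U \<Longrightarrow> Z \<in> covered U C \<longleftrightarrow>
      ((bq \<in> Z \<longleftrightarrow> bq \<in> snd p) \<and> (br \<in> Z \<longleftrightarrow> br \<in> snd p) \<and> (bs \<in> Z \<longleftrightarrow> bs \<in> snd p)) \<or>
      ((bp \<in> Z \<longleftrightarrow> bp \<in> snd q) \<and> (br \<in> Z \<longleftrightarrow> br \<in> snd q) \<and> (bs \<in> Z \<longleftrightarrow> bs \<in> snd q)) \<or>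
      ((bp \<in> Z \<longleftrightarrow> bp \<in> snd r) \<and> (bq \<in> Z \<longleftrightarrow> bq \<in> snd r) \<and> (bs \<in> Z \<longleftrightarrow> bs \<in> snd r)) \<or>
      ((bp \<in> Z \<longleftrightarrow> bp \<in> snd s) \<and> (bq \<in> Z \<longleftrightarrow> bq \<in> snd s) \<and> (br \<in> Z \<longleftrightarrow> br \<in> snd s))"
    unfolding covered_def C
      using cube_iff[OF H(1)] cube_iff[OF H(2)] cube_iff[OF H(3)] cube_iff[OF H(4)] S by auto
  have Pm: "bp \<in> P \<longleftrightarrow> bp \<in> snd q" "bq \<in> P \<longleftrightarrow> bq \<in> snd p" "br \<in> P \<longleftrightarrow> br \<in> snd p" "bs \<in> P \<longleftrightarrow> bs \<in> snd q"
    unfolding P_def using d by auto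
  have Qm: "bp \<in> Q \<longleftrightarrow> bp \<in> snd q" "bq \<in> Q \<longleftrightarrow> bq \<in> snd p" "br \<in> Q \<longleftrightarrow> br \<in> snd q" "bs \<in> Q \<longleftrightarrow> bs \<in> snd p"
    unfolding Q_def using d by auto
  have PF: "P \<in> uncovered U C" unfolding uncovered_def using mem[OF PU] PU Pm far av by auto
  have QF: "Q \<in> uncovered U C" unfolding uncovered_def using mem[OF QU] QU Qm far av by auto
  have E: "{br,bs} = (P - Q) \<union> (Q - P)"
  proof -
    have "(P - Q) \<union> (Q - P) \<subseteq> U" using PU QU by auto
    moreover have "bp \<notin> (P - Q) \<union> (Q - P)" "bq \<notin> (P - Q) \<union> (Q - P)" using Pm Qm by auto
    ultimately have 1: "(P - Q) \<union> (Q - P) \<subseteq> {br,bs}" unfolding U by blast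
    have "br \<in> (P - Q) \<union> (Q - P)" "bs \<in> (P - Q) \<union> (Q - P)" using Pm Qm far by auto
    then have 2: "{br,bs} \<subseteq> (P - Q) \<union> (Q - P)" by blast
    show ?thesis using 1 2 by (rule equalityI[rotated])
  qed
  have only: "Z = P \<or> Z = Q" if "Z \<in> uncovered U C" "Z - {br,bs} = P - {br,bs}" for Z
  proof -
    have Z: "Z \<subseteq> U" "Z \<notin> covered U C" using that unfolding uncovered_def by auto
    have pZ: "bp \<in> Z \<longleftrightarrow> bp \<in> snd q" "bq \<in> Z \<longleftrightarrow> bq \<in> snd p" using that(2) Pm d by blast+
    have nG: "\<not> (((bq \<in> Z \<longleftrightarrow> bq \<in> snd p) \<and> (br \<in> Z \<longleftrightarrow> br \<in> snd p) \<and> (bs \<in> Z \<longleftrightarrow> bs \<in> snd p)) \<or>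
      ((bp \<in> Z \<longleftrightarrow> bp \<in> snd q) \<and> (br \<in> Z \<longleftrightarrow> br \<in> snd q) \<and> (bs \<in> Z \<longleftrightarrow> bs \<in> snd q)) \<or>
      ((bp \<in> Z \<longleftrightarrow> bp \<in> snd r) \<and> (bq \<in> Z \<longleftrightarrow> bq \<in> snd r) \<and> (bs \<in> Z \<longleftrightarrow> bs \<in> snd r)) \<or>
      ((bp \<in> Z \<longleftrightarrow> bp \<in> snd s) \<and> (bq \<in> Z \<longleftrightarrow> bq \<in> snd s) \<and> (br \<in> Z \<longleftrightarrow> br \<in> snd s)))"
      using Z(2) mem[OF Z(1)] by simp
    have "((bp \<in> Z \<longleftrightarrow> bp \<in> P) \<and> (bq \<in> Z \<longleftrightarrow> bq \<in> P) \<and> (br \<in> Z \<longleftrightarrow> br \<in> P) \<and> (bs \<in> Z \<longleftrightarrow> bs \<in> P)) \<or>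
          ((bp \<in> Z \<longleftrightarrow> bp \<in> Q) \<and> (bq \<in> Z \<longleftrightarrow> bq \<in> Q) \<and> (br \<in> Z \<longleftrightarrow> br \<in> Q) \<and> (bs \<in> Z \<longleftrightarrow> bs \<in> Q))"
      unfolding Pm Qm using nG pZ far by argo
    then have "(\<forall>u\<in>U. u \<in> Z \<longleftrightarrow> u \<in> P) \<or> (\<forall>u\<in>U. u \<in> Z \<longleftrightarrow> u \<in> Q)"
      unfolding U by simp
    then show ?thesis using set_eq_on[OF Z(1) PU] set_eq_on[OF Z(1) QU] by blast
  qed
  have "card {br,bs} = 2" using d by simp
  have finU: "finite U" using U by simp
  have FFs: "uncovered U C \<subseteq> Pow U" unfolding uncovered_def by auto
  show ?thesis
    by (rule not_s_extremal_isolated_pair[OF finU FFs PF QF E])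
      (use only \<open>card {br,bs} = 2\<close> in auto)
qed


lemma card_4_obtain:
  assumes "card A = 4"
  obtains a b c d where "A = {a,b,c,d}" "a \<noteq> b" "a \<noteq> c" "a \<noteq> d" "b \<noteq> c" "b \<noteq> d" "c \<noteq> d"
proof -
  obtain a B where aB: "A = insert a B" "a \<notin> B" "card B = 3"
    using card_eq_SucD[of A 3] assms by auto
  then obtain b c d where "B = {b,c,d}" "b \<noteq> c" "c \<noteq> d" "b \<noteq> d" using card_3_iff by metis
  then show ?thesis using that aB by auto
qed

text \<open>The base case of the induction: all coordinates are critical and conflicting. A
  conflicting coordinate is fixed by two cubes, so it is free in at most two of the at most four
  cubes. This leaves three or four cubes with one or two free coordinates each, and the
  possible configurations of free sets reduce to the four above.\<close>

locale critical_system =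
  fixes U :: "nat set" and C :: "(nat set \<times> nat set) set"
  assumes wf: "cube_system U C" and nonempty: "C \<noteq> {}" and card_le_4: "card C \<le> 4"
    and sat: "saturated U C"
    and crit: "\<forall>c\<in>U. critical C c" and conf: "\<forall>c\<in>U. conflicting C c"
begin

definition free :: "nat set \<times> nat set \<Rightarrow> nat set" where "free p = U - fst p"

lemma cube_in_ground: "p \<in> C \<Longrightarrow> snd p \<subseteq> fst p \<and> fst p \<subseteq> U"
  using cube_systemD(2,3)[OF wf] by blast

lemma antichain: "p \<in> C \<Longrightarrow> q \<in> C \<Longrightarrow> fst p \<subseteq> fst q \<Longrightarrow> p = q"
  using cube_systemD(4)[OF wf] by blast

lemma finite_system: "finite C"
  using finite_cube_system[OF wf] .

lemma fixed_eq: assumes "p \<in> C" shows "fst p = U - free p" using cube_in_ground[OF assms]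
  unfolding free_def by auto

lemma flip_in_other_cube:
  assumes p: "p \<in> C" and X: "X \<in> cube U (fst p) (snd p)" and a: "a \<in> fst p"
    and q: "q \<in> C" "flip X a \<in> cube U (fst q) (snd q)"
  shows "q \<noteq> p" "\<And>y. y \<in> fst q \<Longrightarrow> y \<noteq> a \<Longrightarrow> (y \<in> X \<longleftrightarrow> y \<in> snd q)"
proof -
  have XS: "X \<inter> fst p = snd p" using X unfolding cube_def by auto
  have fS: "flip X a \<inter> fst q = snd q" using q unfolding cube_def by auto
  show "q \<noteq> p"
  proof
    assume "q = p"
    then have "a \<in> flip X a \<inter> fst q \<longleftrightarrow> a \<in> snd p" using fS by simp
    then have "a \<in> flip X a \<longleftrightarrow> a \<in> snd p" using a \<open>q = p\<close> by simp
    moreover have "a \<in> X \<longleftrightarrow> a \<in> snd p" using XS a by blast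
    ultimately show False by (simp add: flip_mem)
  qed
  fix y assume y: "y \<in> fst q" "y \<noteq> a"
  have "y \<in> flip X a \<inter> fst q \<longleftrightarrow> y \<in> snd q" using fS by simp
  then have "y \<in> flip X a \<longleftrightarrow> y \<in> snd q" using y(1) by simp
  moreover have "y \<in> flip X a \<longleftrightarrow> y \<in> X" using y(2) by (simp add: flip_mem)
  ultimately show "y \<in> X \<longleftrightarrow> y \<in> snd q" by simp
qed

text \<open>The cube \<open>q\<close> blocks \<open>X\<close> if no neighbour of \<open>X\<close> in a direction fixed by \<open>p\<close> lies in \<open>q\<close>:
  either \<open>q\<close> fixes a direction free in \<open>p\<close> to the opposite of its value in \<open>X\<close>, or \<open>p\<close> and \<open>q\<close>
  disagree on two common fixed directions.\<close>

definition blocks :: "nat set \<times> nat set \<Rightarrow> nat set \<times> nat set \<Rightarrow> nat set \<Rightarrow> bool" where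
  "blocks p q X \<longleftrightarrow> (\<exists>y\<in>fst q - fst p. (y \<in> X \<longleftrightarrow> y \<notin> snd q)) \<or>
     (\<exists>y1 y2. y1 \<noteq> y2 \<and> y1 \<in> fst p \<and> y1 \<in> fst q \<and> y2 \<in> fst p \<and> y2 \<in> fst q \<and>
        (y1 \<in> snd p \<longleftrightarrow> y1 \<notin> snd q) \<and> (y2 \<in> snd p \<longleftrightarrow> y2 \<notin> snd q))"

lemma not_all_blocked:
  assumes p: "p \<in> C" and X: "X \<in> cube U (fst p) (snd p)"
    and bl: "\<And>q. q \<in> C \<Longrightarrow> q \<noteq> p \<Longrightarrow> blocks p q X"
  shows False
proof -
  obtain a where a: "a \<in> fst p" "flip X a \<in> covered U C" using sat p X unfolding saturated_def
    by blast
  then obtain q where q: "q \<in> C" "flip X a \<in> cube U (fst q) (snd q)" unfolding covered_def by auto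
  note cv = flip_in_other_cube[OF p X a(1) q]
  have XS: "X \<inter> fst p = snd p" using X unfolding cube_def by auto
  from bl[OF q(1) cv(1)] show False
    unfolding blocks_def
  proof (elim disjE exE conjE bexE)
    fix y assume "y \<in> fst q - fst p" "(y \<in> X) = (y \<notin> snd q)"
    then show False using cv(2)[of y] a(1) by auto
  next
    fix y1 y2 assume h: "y1 \<noteq> y2" "y1 \<in> fst p" "y1 \<in> fst q" "y2 \<in> fst p" "y2 \<in> fst q"
      "(y1 \<in> snd p) = (y1 \<notin> snd q)" "(y2 \<in> snd p) = (y2 \<notin> snd q)"
    have "y1 \<noteq> a \<or> y2 \<noteq> a" using h(1) by auto
    then show False
    proof
      assume "y1 \<noteq> a" then show False using cv(2)[OF h(3)] h XS by blast
    next
      assume "y2 \<noteq> a" then show False using cv(2)[OF h(5)] h XS by blast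
    qed
  qed
qed

lemma not_free_in_three:
  assumes "c \<in> U" "r1 \<in> C" "r2 \<in> C" "r3 \<in> C" "r1 \<noteq> r2" "r1 \<noteq> r3" "r2 \<noteq> r3"
    "c \<notin> fst r1" "c \<notin> fst r2" "c \<notin> fst r3"
  shows False
proof -
  obtain p q where pq: "p \<in> C" "q \<in> C" "c \<in> fst p" "c \<in> fst q" "c \<in> snd p" "c \<notin> snd q"
    using conf assms(1) unfolding conflicting_def by blast
  have "{p, q, r1, r2, r3} \<subseteq> C" using pq assms by auto
  moreover have "p \<noteq> q" "p \<noteq> r1" "p \<noteq> r2" "p \<noteq> r3" "q \<noteq> r1" "q \<noteq> r2" "q \<noteq> r3"
    using pq assms by auto
  moreover have "card {p, q, r1, r2, r3} = 5" using calculation(2-) assms(5-7) by simp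
  ultimately have "5 \<le> card C" using finite_system by (metis card_mono)
  then show False using card_le_4 by simp
qed

lemma free_cover: "c \<in> U \<Longrightarrow> \<exists>q\<in>C. c \<in> free q"
  using crit unfolding critical_def free_def using cube_in_ground by blast

lemma free_nonempty: assumes "p \<in> C" shows "free p \<noteq> {}"
proof
  assume "free p = {}"
  then have Sp: "fst p = U" using fixed_eq[OF assms] by auto
  have Cp: "C = {p}"
  proof -
    have "\<And>q. q \<in> C \<Longrightarrow> q = p"
    proof -
      fix q assume "q \<in> C" then show "q = p"
        using antichain[OF \<open>q \<in> C\<close> assms] cube_in_ground[OF \<open>q \<in> C\<close>] Sp by simp
    qed
    then show ?thesis using assms by blast
  qed
  have X: "snd p \<in> cube U (fst p) (snd p)" using cube_in_ground[OF assms] unfolding cube_def by auto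
  show False using not_all_blocked[OF assms X] Cp by blast
qed


lemma no_distinct_representatives:
  assumes p: "p \<in> C" and u: "\<And>q. q \<in> C \<Longrightarrow> q \<noteq> p \<Longrightarrow> u q \<in> free p \<and> u q \<in> fst q"
    and inj: "\<And>q q'. q \<in> C \<Longrightarrow> q' \<in> C \<Longrightarrow> q \<noteq> p \<Longrightarrow> q' \<noteq> p \<Longrightarrow> u q = u q' \<Longrightarrow> q = q'"
  shows False
proof -
  define A where "A = {u q | q. q \<in> C \<and> q \<noteq> p \<and> u q \<notin> snd q}"
  have AD: "A \<subseteq> free p" using u unfolding A_def by auto
  define X where "X = snd p \<union> A"
  have X: "X \<in> cube U (fst p) (snd p)"
    using AD cube_in_ground[OF p] unfolding X_def cube_def free_def by auto
  show False
  proof (rule not_all_blocked[OF p X])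
    fix q assume q: "q \<in> C" "q \<noteq> p"
    have uq: "u q \<in> fst q - fst p" using u[OF q] unfolding free_def by auto
    have "u q \<in> X \<longleftrightarrow> u q \<in> A" using uq cube_in_ground[OF p] unfolding X_def by auto
    also have "\<dots> \<longleftrightarrow> u q \<notin> snd q"
    proof
      assume "u q \<in> A"
      then obtain q' where "q' \<in> C" "q' \<noteq> p" "u q' \<notin> snd q'" "u q = u q'" unfolding A_def by auto
      then show "u q \<notin> snd q" using inj[OF q(1) _ q(2)] by metis
    next
      assume "u q \<notin> snd q" then show "u q \<in> A" using q unfolding A_def by blast
    qed
    finally show "blocks p q X" unfolding blocks_def using uq by blast
  qed
qed

lemma distinct_representatives3:
  assumes "e1 \<noteq> e2" "a \<noteq> e1" "a \<noteq> e2" "a \<in> M1" "b0 \<in> M2" "c0 \<in> M3"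
    "(e1 \<in> M1 \<and> e1 \<in> M2) \<or> (e1 \<in> M1 \<and> e1 \<in> M3) \<or> (e1 \<in> M2 \<and> e1 \<in> M3)"
    "(e2 \<in> M1 \<and> e2 \<in> M2) \<or> (e2 \<in> M1 \<and> e2 \<in> M3) \<or> (e2 \<in> M2 \<and> e2 \<in> M3)"
  shows "\<exists>a' b' c'. a' \<in> {a,b0,c0,e1,e2} \<and> b' \<in> {a,b0,c0,e1,e2} \<and> c' \<in> {a,b0,c0,e1,e2} \<and>
    a' \<noteq> b' \<and> a' \<noteq> c' \<and> b' \<noteq> c' \<and> a' \<in> M1 \<and> b' \<in> M2 \<and> c' \<in> M3"
proof -
  have c1: "e1 \<in> M2 \<or> e1 \<in> M3" "e2 \<in> M2 \<or> e2 \<in> M3" using assms(7,8) by blast+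
  show ?thesis
  proof (cases "e1 \<in> M2 \<and> e2 \<in> M3")
    case True then show ?thesis using assms(1-4) by blast
  next
    case F1: False
    show ?thesis
    proof (cases "e2 \<in> M2 \<and> e1 \<in> M3")
      case True then show ?thesis using assms(1-4) by blast
    next
      case F2: False
      have "(e1 \<notin> M3 \<and> e2 \<notin> M3) \<or> (e1 \<notin> M2 \<and> e2 \<notin> M2)" using c1 F1 F2 by blast
      then show ?thesis
      proof
        assume h: "e1 \<notin> M3 \<and> e2 \<notin> M3"
        then have "e1 \<in> M1" "e1 \<in> M2" "e2 \<in> M1" "e2 \<in> M2" using assms(7,8) by blast+
        moreover have "c0 \<noteq> e1" "c0 \<noteq> e2" using h assms(6) by blast+
        ultimately show ?thesis using assms(1-6)
          by (cases "c0 = a") (metis insertCI)+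
      next
        assume h: "e1 \<notin> M2 \<and> e2 \<notin> M2"
        then have "e1 \<in> M1" "e1 \<in> M3" "e2 \<in> M1" "e2 \<in> M3" using assms(7,8) by blast+
        moreover have "b0 \<noteq> e1" "b0 \<noteq> e2" using h assms(5) by blast+
        ultimately show ?thesis using assms(1-6)
          by (cases "b0 = a") (metis insertCI)+
      qed
    qed
  qed
qed

lemma card_ge_3: "3 \<le> card C"
proof (rule ccontr)
  assume "\<not> 3 \<le> card C"
  then have c: "card C \<le> 2" by simp
  obtain p where p: "p \<in> C" using nonempty by auto
  have "\<exists>q. C \<subseteq> {p, q}"
  proof (cases "C - {p} = {}")
    case True then show ?thesis by auto
  next
    case False
    then obtain q where q: "q \<in> C - {p}" by auto
    have "C - {p} \<subseteq> {q}"
    proof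
      fix r assume r: "r \<in> C - {p}"
      show "r \<in> {q}"
      proof (rule ccontr)
        assume "r \<notin> {q}"
        then have "{p, q, r} \<subseteq> C" "card {p,q,r} = 3" using p q r by auto
        then show False using c finite_system
          by (metis card_mono not_less_eq_eq numeral_3_eq_3 numeral_2_eq_2)
      qed
    qed
    then show ?thesis by blast
  qed
  then obtain q where Cq: "C \<subseteq> {p, q}" by blast
  show False
  proof (cases "q \<in> C \<and> q \<noteq> p")
    case True
    have "\<not> fst q \<subseteq> fst p" using antichain[OF True[THEN conjunct1] p] True by blast
    then obtain y where y: "y \<in> fst q" "y \<notin> fst p" by blast
    then have "y \<in> free p" using cube_in_ground[OF True[THEN conjunct1]] unfolding free_def by auto
    show False
      by (rule no_distinct_representatives[OF p, of "\<lambda>_. y"]) (use Cq y \<open>y \<in> free p\<close> in auto)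
  next
    case False
    show False by (rule no_distinct_representatives[OF p, of "\<lambda>_. 0"]) (use Cq False in auto)
  qed
qed

lemma obtain_others3:
  assumes "card C = 4" "p \<in> C"
  obtains q1 q2 q3 where "C = {p, q1, q2, q3}" "p \<noteq> q1" "p \<noteq> q2" "p \<noteq> q3" "q1 \<noteq> q2" "q1 \<noteq> q3"
    "q2 \<noteq> q3"
proof -
  have "card (C - {p}) = 3" using assms finite_system by simp
  then obtain q1 q2 q3 where "C - {p} = {q1,q2,q3}" "q1 \<noteq> q2" "q2 \<noteq> q3" "q1 \<noteq> q3" using card_3_iff
    by metis
  then show ?thesis using that assms(2) by (metis Diff_iff insert_Diff insertCI)
qed

lemma obtain_others2:
  assumes "card C = 3" "p \<in> C"
  obtains q1 q2 where "C = {p, q1, q2}" "p \<noteq> q1" "p \<noteq> q2" "q1 \<noteq> q2"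
proof -
  have "card (C - {p}) = 2" using assms finite_system by simp
  then obtain q1 q2 where "C - {p} = {q1,q2}" "q1 \<noteq> q2" using card_2_iff by metis
  then show ?thesis using that assms(2) by (metis Diff_iff insert_Diff insertCI)
qed

lemma no_three_free:
  assumes k: "card C = 4" and p: "p \<in> C"
    and xyz: "x \<in> free p" "y \<in> free p" "z \<in> free p" "x \<noteq> y" "x \<noteq> z" "y \<noteq> z"
  shows False
proof -
  obtain q1 q2 q3 where C: "C = {p, q1, q2, q3}" "p \<noteq> q1" "p \<noteq> q2" "p \<noteq> q3" "q1 \<noteq> q2" "q1 \<noteq> q3"
    "q2 \<noteq> q3"
    using obtain_others3[OF k p] by metis
  have inC: "q1 \<in> C" "q2 \<in> C" "q3 \<in> C" using C by auto
  have pD: "x \<notin> fst p" "y \<notin> fst p" "z \<notin> fst p" "x \<in> U" "y \<in> U" "z \<in> U" using xyz unfolding free_def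
    by auto
  have two: "(w \<in> fst q1 \<and> w \<in> fst q2) \<or> (w \<in> fst q1 \<and> w \<in> fst q3) \<or> (w \<in> fst q2 \<and> w \<in> fst q3)"
    if "w \<in> U" "w \<notin> fst p" for w
  proof (rule ccontr)
    assume "\<not> ?thesis"
    then have "(w \<notin> fst q1 \<and> w \<notin> fst q2) \<or> (w \<notin> fst q1 \<and> w \<notin> fst q3) \<or> (w \<notin> fst q2 \<and> w \<notin> fst q3)"
      by blast
    then show False using not_free_in_three[OF that(1) p] inC C that(2) by metis
  qed
  have ne1: "\<exists>w. w \<in> free p \<and> w \<in> fst q" if "q \<in> C" "q \<noteq> p" for q
  proof -
    have "\<not> fst q \<subseteq> fst p" using antichain[OF that(1) p] that(2) by blast
    then obtain w where "w \<in> fst q" "w \<notin> fst p" by blast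
    then show ?thesis using cube_in_ground[OF that(1)] unfolding free_def by blast
  qed
  obtain a0 where a0: "a0 \<in> free p" "a0 \<in> fst q1" using ne1 inC C by blast
  obtain b0 where b0: "b0 \<in> free p" "b0 \<in> fst q2" using ne1 inC C by blast
  obtain c0 where c0: "c0 \<in> free p" "c0 \<in> fst q3" using ne1 inC C by blast
  obtain e1 e2 where e: "e1 \<in> {x,y,z}" "e2 \<in> {x,y,z}" "e1 \<noteq> e2" "a0 \<noteq> e1" "a0 \<noteq> e2"
  proof (cases "a0 = x")
    case True then show ?thesis using that xyz by blast
  next
    case False
    show ?thesis
    proof (cases "a0 = y")
      case True then show ?thesis using that xyz \<open>a0 \<noteq> x\<close> by blast
    next
      case False then show ?thesis using that xyz \<open>a0 \<noteq> x\<close> by blast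
    qed
  qed
  have eU: "e1 \<in> U" "e1 \<notin> fst p" "e2 \<in> U" "e2 \<notin> fst p" using e pD by auto
  obtain a b c where abc: "a \<in> {a0,b0,c0,e1,e2}" "b \<in> {a0,b0,c0,e1,e2}" "c \<in> {a0,b0,c0,e1,e2}"
    "a \<noteq> b" "a \<noteq> c" "b \<noteq> c" "a \<in> fst q1" "b \<in> fst q2" "c \<in> fst q3"
    using distinct_representatives3[OF e(3-5) a0(2) b0(2) c0(2) two[OF eU(1,2)] two[OF eU(3,4)]]
      by blast
  have abcD: "a \<in> free p" "b \<in> free p" "c \<in> free p" using abc a0 b0 c0 e xyz by auto
  define u where "u q = (if q = q1 then a else if q = q2 then b else c)" for q
  show False
  proof (rule no_distinct_representatives[OF p, of u])
    fix q assume "q \<in> C" "q \<noteq> p"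
    then have "q = q1 \<or> q = q2 \<or> q = q3" using C by auto
    then show "u q \<in> free p \<and> u q \<in> fst q" using abc abcD C unfolding u_def by auto
  next
    fix q q' assume "q \<in> C" "q' \<in> C" "q \<noteq> p" "q' \<noteq> p" "u q = u q'"
    moreover have "q = q1 \<or> q = q2 \<or> q = q3" "q' = q1 \<or> q' = q2 \<or> q' = q3" using C calculation
      by auto
    ultimately show "q = q'" using abc C unfolding u_def by (auto split: if_splits)
  qed
qed

lemma no_two_free:
  assumes k: "card C = 3" and p: "p \<in> C" and xy: "x \<in> free p" "y \<in> free p" "x \<noteq> y"
  shows False
proof -
  obtain q1 q2 where C: "C = {p, q1, q2}" "p \<noteq> q1" "p \<noteq> q2" "q1 \<noteq> q2"
    using obtain_others2[OF k p] by metis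
  have inC: "q1 \<in> C" "q2 \<in> C" using C by auto
  have fixed: "w \<in> fst q1 \<and> w \<in> fst q2" if "w \<in> free p" for w
  proof -
    have w: "w \<in> U" "w \<notin> fst p" using that unfolding free_def by auto
    obtain r s where rs: "r \<in> C" "s \<in> C" "w \<in> fst r" "w \<in> fst s" "w \<in> snd r" "w \<notin> snd s"
      using conf w(1) unfolding conflicting_def by blast
    have "r \<noteq> s" using rs by auto
    moreover have "r \<noteq> p" "s \<noteq> p" using rs w by auto
    ultimately have "{r, s} = {q1, q2}" using rs C by auto
    then show ?thesis using rs by auto
  qed
  define u where "u q = (if q = q1 then x else y)" for q
  show False
  proof (rule no_distinct_representatives[OF p, of u])
    fix q assume "q \<in> C" "q \<noteq> p"
    then have "q = q1 \<or> q = q2" using C by auto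
    then show "u q \<in> free p \<and> u q \<in> fst q" using fixed xy C unfolding u_def by auto
  next
    fix q q' assume "q \<in> C" "q' \<in> C" "q \<noteq> p" "q' \<noteq> p" "u q = u q'"
    then show "q = q'" using xy C unfolding u_def by (auto split: if_splits)
  qed
qed


lemma conflict_of_two:
  assumes "c \<in> U" "r \<in> C" "s \<in> C" "\<And>q. q \<in> C \<Longrightarrow> c \<in> fst q \<Longrightarrow> q = r \<or> q = s"
  shows "c \<in> snd r \<longleftrightarrow> c \<notin> snd s"
proof -
  obtain p q where pq: "p \<in> C" "q \<in> C" "c \<in> fst p" "c \<in> fst q" "c \<in> snd p" "c \<notin> snd q"
    using conf assms(1) unfolding conflicting_def by blast
  have "p = r \<or> p = s" "q = r \<or> q = s" using assms(4) pq by auto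
  moreover have "p \<noteq> q" using pq by auto
  ultimately show ?thesis using pq by auto
qed

lemma bool_pair_avoiding:
  "\<exists>(u::bool) (v::bool). (u \<noteq> a1 \<or> v \<noteq> b1) \<and> (u \<noteq> a2 \<or> v \<noteq> b2) \<and> (u \<noteq> a3 \<or> v \<noteq> b3)"
  by (cases a1; cases b1; cases a2; cases b2; cases a3; cases b3) auto

lemma free_pair_shared:
  assumes k: "card C = 4" and p: "p \<in> C" and Dp: "free p = {b,c}" "b \<noteq> c"
  shows "\<exists>q\<in>C. q \<noteq> p \<and> (b \<in> free q \<or> c \<in> free q)"
proof (rule ccontr)
  assume nq: "\<not> ?thesis"
  obtain q1 q2 q3 where C: "C = {p, q1, q2, q3}" "p \<noteq> q1" "p \<noteq> q2" "p \<noteq> q3" "q1 \<noteq> q2" "q1 \<noteq> q3"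
    "q2 \<noteq> q3"
    using obtain_others3[OF k p] by metis
  have bcU: "b \<in> U" "c \<in> U" "b \<notin> fst p" "c \<notin> fst p" using Dp unfolding free_def by auto
  have fx: "b \<in> fst q \<and> c \<in> fst q" if "q \<in> C" "q \<noteq> p" for q
    using nq that bcU unfolding free_def by blast
  obtain u v where uv:
    "(u \<noteq> (b \<in> snd q1) \<or> v \<noteq> (c \<in> snd q1)) \<and> (u \<noteq> (b \<in> snd q2) \<or> v \<noteq> (c \<in> snd q2)) \<and>
      (u \<noteq> (b \<in> snd q3) \<or> v \<noteq> (c \<in> snd q3))"
    using bool_pair_avoiding[of "b \<in> snd q1" "c \<in> snd q1" "b \<in> snd q2" "c \<in> snd q2" "b \<in> snd q3"
      "c \<in> snd q3"]
    by (elim exE) blast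
  define X where "X = snd p \<union> (if u then {b} else {}) \<union> (if v then {c} else {})"
  have X: "X \<in> cube U (fst p) (snd p)" using cube_in_ground[OF p] bcU unfolding X_def cube_def
    by auto
  have Xb: "b \<in> X \<longleftrightarrow> u" and Xc: "c \<in> X \<longleftrightarrow> v" using cube_in_ground[OF p] bcU Dp unfolding X_def by auto
  show False
  proof (rule not_all_blocked[OF p X])
    fix q assume q: "q \<in> C" "q \<noteq> p"
    have "q = q1 \<or> q = q2 \<or> q = q3" using q C by auto
    then have "(b \<in> X \<longleftrightarrow> b \<notin> snd q) \<or> (c \<in> X \<longleftrightarrow> c \<notin> snd q)" using uv Xb Xc by auto
    then show "blocks p q X" unfolding blocks_def using fx[OF q] bcU by blast
  qed
qed

lemma private_free_coord:
  assumes k: "card C = 4" and p: "p \<in> C" and q: "q \<in> C" "q \<noteq> p"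
    and Dp: "free p = {w, x}" "w \<noteq> x" and xq: "x \<in> free q" and wq: "w \<notin> free q"
    and priv: "\<And>r. r \<in> C \<Longrightarrow> r \<noteq> p \<Longrightarrow> w \<notin> free r"
    and r: "r \<in> C" "r \<noteq> p" "r \<noteq> q"
  shows "w \<in> fst r \<and> (w \<in> snd r \<longleftrightarrow> w \<notin> snd q)"
proof -
  have wx: "w \<in> U" "x \<in> U" "w \<notin> fst p" "x \<notin> fst p" using Dp unfolding free_def by auto
  have wfix: "w \<in> fst l" if "l \<in> C" "l \<noteq> p" for l using priv[OF that] wx unfolding free_def by auto
  have xfix: "x \<in> fst l" if "l \<in> C" "l \<noteq> p" "l \<noteq> q" for l
  proof (rule ccontr)
    assume "x \<notin> fst l"
    moreover have "x \<notin> fst q" using xq unfolding free_def by auto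
    ultimately show False using not_free_in_three[OF wx(2) p q(1) that(1)] q(2) that wx(4) by metis
  qed
  have cover: "\<exists>l\<in>C. l \<noteq> p \<and> l \<noteq> q \<and> (w \<in> snd l \<longleftrightarrow> w \<notin> snd q) \<and> (x \<in> snd l \<longleftrightarrow> t)" for t
  proof -
    define X where "X = snd p \<union> (if w \<in> snd q then {} else {w}) \<union> (if t then {x} else {})"
    have X: "X \<in> cube U (fst p) (snd p)" using cube_in_ground[OF p] wx unfolding X_def cube_def
      by auto
    have Xw: "w \<in> X \<longleftrightarrow> w \<notin> snd q" and Xx: "x \<in> X \<longleftrightarrow> t" using cube_in_ground[OF p] wx Dp
      unfolding X_def by auto
    obtain a where a: "a \<in> fst p" "flip X a \<in> covered U C" using sat p X unfolding saturated_def
      by blast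
    then obtain l where l: "l \<in> C" "flip X a \<in> cube U (fst l) (snd l)" unfolding covered_def by auto
    note cv = flip_in_other_cube[OF p X a(1) l]
    have aw: "a \<noteq> w" "a \<noteq> x" using a(1) wx by auto
    have "l \<noteq> q"
    proof
      assume "l = q"
      then have "w \<in> X \<longleftrightarrow> w \<in> snd q" using cv(2)[of w] wfix[OF q] aw by simp
      then show False using Xw by simp
    qed
    moreover have "w \<in> snd l \<longleftrightarrow> w \<notin> snd q" using cv(2)[of w] wfix[OF l(1) cv(1)] aw Xw by simp
    moreover have "x \<in> snd l \<longleftrightarrow> t" using cv(2)[of x] xfix[OF l(1) cv(1) calculation(1)] aw Xx by simp
    ultimately show ?thesis using l(1) cv(1) by blast
  qed
  obtain l0 where l0: "l0 \<in> C" "l0 \<noteq> p" "l0 \<noteq> q" "w \<in> snd l0 \<longleftrightarrow> w \<notin> snd q" "x \<notin> snd l0"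
    using cover[of False] by blast
  obtain l1 where l1: "l1 \<in> C" "l1 \<noteq> p" "l1 \<noteq> q" "w \<in> snd l1 \<longleftrightarrow> w \<notin> snd q" "x \<in> snd l1"
    using cover[of True] by blast
  have "l0 \<noteq> l1" using l0 l1 by auto
  have "card (C - {p, q}) = 2" using k p q finite_system by (simp add: card_Diff_subset)
  then obtain m1 m2 where m: "C - {p, q} = {m1, m2}" "m1 \<noteq> m2" using card_2_iff by metis
  have "l0 \<in> {m1, m2}" "l1 \<in> {m1, m2}" "r \<in> {m1, m2}" using l0 l1 r m(1) by blast+
  then have "r = l0 \<or> r = l1" using \<open>l0 \<noteq> l1\<close> by auto
  then show ?thesis using l0 l1 wfix[OF r(1,2)] by auto
qed


lemma free_subset: "free p \<subseteq> U" unfolding free_def by auto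

lemma mem_free: "x \<in> free p \<longleftrightarrow> x \<in> U \<and> x \<notin> fst p" unfolding free_def by auto

lemma blocksI_free: "y \<in> fst q \<Longrightarrow> y \<notin> fst p \<Longrightarrow> (y \<in> X \<longleftrightarrow> y \<notin> snd q) \<Longrightarrow> blocks p q X"
  unfolding blocks_def by blast

lemma blocksI_pair: "y1 \<noteq> y2 \<Longrightarrow> y1 \<in> fst p \<Longrightarrow> y1 \<in> fst q \<Longrightarrow> y2 \<in> fst p \<Longrightarrow> y2 \<in> fst q \<Longrightarrow>
   (y1 \<in> snd p \<longleftrightarrow> y1 \<notin> snd q) \<Longrightarrow> (y2 \<in> snd p \<longleftrightarrow> y2 \<notin> snd q) \<Longrightarrow> blocks p q X"
  unfolding blocks_def by blast

lemma free_antichain: "p \<in> C \<Longrightarrow> q \<in> C \<Longrightarrow> free p \<subseteq> free q \<Longrightarrow> p = q"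
  using antichain[of q p] fixed_eq[of p] fixed_eq[of q] by auto

lemma free_card_1_or_2:
  assumes k: "card C = 4" and p: "p \<in> C"
  shows "(\<exists>b. free p = {b}) \<or> (\<exists>b c. b \<noteq> c \<and> free p = {b,c})"
proof -
  obtain b where b: "b \<in> free p" using free_nonempty[OF p] by auto
  show ?thesis
  proof (cases "free p = {b}")
    case False
    then obtain c where c: "c \<in> free p" "c \<noteq> b" using b by auto
    show ?thesis
    proof (cases "free p = {b,c}")
      case False
      then obtain z where "z \<in> free p" "z \<noteq> b" "z \<noteq> c" using b c by auto
      then show ?thesis using no_three_free[OF k p b c(1)] c by blast
    qed (use c in blast)
  qed blast
qed

lemma not_in_free_of_three:
  assumes "c \<in> free r1" "c \<in> free r2" "c \<in> free r3" "r1 \<in> C" "r2 \<in> C" "r3 \<in> C" "r1 \<noteq> r2" "r1 \<noteq> r3"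
    "r2 \<noteq> r3"
  shows False
  using not_free_in_three[of c r1 r2 r3] assms unfolding free_def by blast

lemma no_free_path4:
  assumes k: "card C = 4"
    and C: "C = {c1,c2,c3,c4}" "c1 \<noteq> c2" "c1 \<noteq> c3" "c1 \<noteq> c4" "c2 \<noteq> c3" "c2 \<noteq> c4" "c3 \<noteq> c4"
    and d: "a \<noteq> b" "a \<noteq> c" "a \<noteq> d" "a \<noteq> e" "b \<noteq> c" "b \<noteq> d" "b \<noteq> e" "c \<noteq> d" "c \<noteq> e" "d \<noteq> e"
    and free: "free c1 = {a,b}" "free c2 = {b,c}" "free c3 = {c,d}" "free c4 = {d,e}"
  shows False
proof -
  have inC: "c1 \<in> C" "c2 \<in> C" "c3 \<in> C" "c4 \<in> C" using C by auto
  have U: "a \<in> U" "b \<in> U" "c \<in> U" "d \<in> U" "e \<in> U" using free free_subset by blast+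
  have fs: "\<And>y p. p \<in> C \<Longrightarrow> y \<in> U \<Longrightarrow> y \<notin> free p \<Longrightarrow> y \<in> fst p" unfolding free_def by auto
  have e1: "a \<in> fst c3 \<and> (a \<in> snd c3 \<longleftrightarrow> a \<notin> snd c2)"
    by (rule private_free_coord[OF k inC(1) inC(2) C(2)[symmetric] free(1) d(1)])
      (use free d C in auto)
  have e2: "e \<in> fst c2 \<and> (e \<in> snd c2 \<longleftrightarrow> e \<notin> snd c3)"
    by (rule private_free_coord[OF k inC(4) inC(3) C(7), of e d]) (use free d C in auto)
  define X where "X = snd c2 \<union> (if c \<in> snd c1 then {} else {c}) \<union> (if b \<in> snd c4 then {} else {b})"
  have X: "X \<in> cube U (fst c2) (snd c2)" using cube_in_ground[OF inC(2)] U free(2)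
    unfolding X_def cube_def free_def by auto
  have bc2: "b \<notin> fst c2" "c \<notin> fst c2" using free(2) unfolding free_def by auto
  have Xb: "b \<in> X \<longleftrightarrow> b \<notin> snd c4" and Xc: "c \<in> X \<longleftrightarrow> c \<notin> snd c1"
    using cube_in_ground[OF inC(2)] bc2 d unfolding X_def by auto
  show False
  proof (rule not_all_blocked[OF inC(2) X])
    fix q assume q: "q \<in> C" "q \<noteq> c2"
    then have "q = c1 \<or> q = c3 \<or> q = c4" using C by auto
    then show "blocks c2 q X"
    proof (elim disjE)
      assume "q = c1"
      have "c \<in> fst c1" using fs[OF inC(1) U(3)] free(1) d by auto
      then show ?thesis using blocksI_free[OF _ bc2(2) Xc] \<open>q = c1\<close> by simp
    next
      assume "q = c3"
      moreover have "a \<in> fst c2" "e \<in> fst c3" using fs[OF inC(2) U(1)] fs[OF inC(3) U(5)] free d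
        by auto
      ultimately show ?thesis using blocksI_pair[OF d(4), of c2 c3] e1 e2 by blast
    next
      assume "q = c4"
      have "b \<in> fst c4" using fs[OF inC(4) U(2)] free(4) d by auto
      then show ?thesis using blocksI_free[OF _ bc2(1) Xb] \<open>q = c4\<close> by simp
    qed
  qed
qed

lemma no_free_path3_point:
  assumes k: "card C = 4"
    and C: "C = {c1,c2,c3,c4}" "c1 \<noteq> c2" "c1 \<noteq> c3" "c1 \<noteq> c4" "c2 \<noteq> c3" "c2 \<noteq> c4" "c3 \<noteq> c4"
    and d: "a \<noteq> b" "a \<noteq> c" "a \<noteq> d" "a \<noteq> e" "b \<noteq> c" "b \<noteq> d" "b \<noteq> e" "c \<noteq> d" "c \<noteq> e" "d \<noteq> e"
    and free: "free c1 = {a,b}" "free c2 = {b,c}" "free c3 = {c,d}" "free c4 = {e}"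
  shows False
proof -
  have inC: "c1 \<in> C" "c2 \<in> C" "c3 \<in> C" "c4 \<in> C" using C by auto
  have U: "a \<in> U" "b \<in> U" "c \<in> U" "d \<in> U" "e \<in> U" using free free_subset by blast+
  have fs: "\<And>y p. p \<in> C \<Longrightarrow> y \<in> U \<Longrightarrow> y \<notin> free p \<Longrightarrow> y \<in> fst p" unfolding free_def by auto
  have e1: "a \<in> fst c4 \<and> (a \<in> snd c4 \<longleftrightarrow> a \<notin> snd c2)"
    by (rule private_free_coord[OF k inC(1) inC(2) C(2)[symmetric] free(1) d(1)])
      (use free d C in auto)
  have e2: "d \<in> fst c4 \<and> (d \<in> snd c4 \<longleftrightarrow> d \<notin> snd c2)"
    by (rule private_free_coord[OF k inC(3) inC(2) C(5), of d c]) (use free d C in auto)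
  define X where "X = snd c2 \<union> (if c \<in> snd c1 then {} else {c}) \<union> (if b \<in> snd c3 then {} else {b})"
  have X: "X \<in> cube U (fst c2) (snd c2)" using cube_in_ground[OF inC(2)] U free(2)
    unfolding X_def cube_def free_def by auto
  have bc2: "b \<notin> fst c2" "c \<notin> fst c2" using free(2) unfolding free_def by auto
  have Xb: "b \<in> X \<longleftrightarrow> b \<notin> snd c3" and Xc: "c \<in> X \<longleftrightarrow> c \<notin> snd c1"
    using cube_in_ground[OF inC(2)] bc2 d unfolding X_def by auto
  show False
  proof (rule not_all_blocked[OF inC(2) X])
    fix q assume q: "q \<in> C" "q \<noteq> c2"
    then have "q = c1 \<or> q = c3 \<or> q = c4" using C by auto
    then show "blocks c2 q X"
    proof (elim disjE)
      assume "q = c1"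
      have "c \<in> fst c1" using fs[OF inC(1) U(3)] free(1) d by auto
      then show ?thesis using blocksI_free[OF _ bc2(2) Xc] \<open>q = c1\<close> by simp
    next
      assume "q = c3"
      have "b \<in> fst c3" using fs[OF inC(3) U(2)] free(3) d by auto
      then show ?thesis using blocksI_free[OF _ bc2(1) Xb] \<open>q = c3\<close> by simp
    next
      assume "q = c4"
      moreover have "a \<in> fst c2" "d \<in> fst c2" using fs[OF inC(2)] U free d by auto
      ultimately show ?thesis using blocksI_pair[OF d(3), of c2 c4] e1 e2 by blast
    qed
  qed
qed

lemma no_free_path2_private:
  assumes p: "p1 \<in> C" "p2 \<in> C" "p1 \<noteq> p2" and free: "free p1 = {x1,x2}" "free p2 = {x2,x3}"
    and d: "x1 \<noteq> x2" "x2 \<noteq> x3" "x1 \<noteq> x3"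
    and pr1: "\<And>r. r \<in> C \<Longrightarrow> r \<noteq> p1 \<Longrightarrow> x1 \<notin> free r"
    and pr3: "\<And>r. r \<in> C \<Longrightarrow> r \<noteq> p2 \<Longrightarrow> x3 \<notin> free r"
  shows False
proof -
  have x2U: "x2 \<in> U" using free free_subset by blast
  obtain p q where pq: "p \<in> C" "q \<in> C" "fst p - fst q = {x2}" using crit x2U unfolding critical_def
    by blast
  have x2q: "x2 \<in> free q" "x2 \<notin> free p" using pq x2U cube_in_ground[OF pq(1)] unfolding free_def
    by auto
  have "q = p1 \<or> q = p2"
  proof (rule ccontr)
    assume "\<not> ?thesis"
    then show False using not_in_free_of_three[of x2 p1 p2 q] free x2q p pq by auto
  qed
  then show False
  proof
    assume "q = p1"
    have "x1 \<in> free p1" using free by simp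
    then have x1: "x1 \<notin> fst q" "x1 \<in> U" using \<open>q = p1\<close> unfolding mem_free by auto
    have "x1 \<notin> fst p"
    proof
      assume "x1 \<in> fst p" then have "x1 \<in> fst p - fst q" using x1(1) by simp
      then show False using pq(3) d(1) by simp
    qed
    then have "x1 \<in> free p" using x1 unfolding mem_free by simp
    moreover have "p \<noteq> p1" using x2q free by auto
    ultimately show False using pr1 pq(1) by blast
  next
    assume "q = p2"
    have "x3 \<in> free p2" using free by simp
    then have x3: "x3 \<notin> fst q" "x3 \<in> U" using \<open>q = p2\<close> unfolding mem_free by auto
    have "x3 \<notin> fst p"
    proof
      assume "x3 \<in> fst p" then have "x3 \<in> fst p - fst q" using x3(1) by simp
      then show False using pq(3) d(2) by simp
    qed
    then have "x3 \<in> free p" using x3 unfolding mem_free by simp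
    moreover have "p \<noteq> p2" using x2q free by auto
    ultimately show False using pr3 pq(1) by blast
  qed
qed


lemma four_points_flip:
  assumes C: "C = {q1,q2,q3,q4}" and U: "U = {b1,b2,b3,b4}"
    and d: "b1 \<noteq> b2" "b1 \<noteq> b3" "b1 \<noteq> b4" "b2 \<noteq> b3" "b2 \<noteq> b4" "b3 \<noteq> b4"
    and free: "free q1 = {b1}" "free q2 = {b2}" "free q3 = {b3}" "free q4 = {b4}"
  shows "((b1 \<in> snd q2 \<longleftrightarrow> v) \<and> \<not> ((b3 \<in> snd q1 \<longleftrightarrow> b3 \<notin> snd q2) \<and> (b4 \<in> snd q1 \<longleftrightarrow> b4 \<notin> snd q2))) \<or>
    ((b1 \<in> snd q3 \<longleftrightarrow> v) \<and> \<not> ((b2 \<in> snd q1 \<longleftrightarrow> b2 \<notin> snd q3) \<and> (b4 \<in> snd q1 \<longleftrightarrow> b4 \<notin> snd q3))) \<or>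
    ((b1 \<in> snd q4 \<longleftrightarrow> v) \<and> \<not> ((b2 \<in> snd q1 \<longleftrightarrow> b2 \<notin> snd q4) \<and> (b3 \<in> snd q1 \<longleftrightarrow> b3 \<notin> snd q4)))"
proof -
  have inC: "q1 \<in> C" "q2 \<in> C" "q3 \<in> C" "q4 \<in> C" using C by auto
  have S: "fst q1 = {b2,b3,b4}" "fst q2 = {b1,b3,b4}" "fst q3 = {b1,b2,b4}" "fst q4 = {b1,b2,b3}"
    using fixed_eq[OF inC(1)] fixed_eq[OF inC(2)] fixed_eq[OF inC(3)] fixed_eq[OF inC(4)] free U d
      by auto
  define X where "X = snd q1 \<union> (if v then {b1} else {})"
  have nf1: "b1 \<notin> fst q1" using S(1) d(1-3) by auto
  have nb1: "b1 \<notin> snd q1" using cube_in_ground[OF inC(1)] nf1 by auto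
  have X: "X \<in> cube U (fst q1) (snd q1)" using cube_in_ground[OF inC(1)] nf1 U
    unfolding X_def cube_def by auto
  have Xm: "b1 \<in> X \<longleftrightarrow> v" "b2 \<in> X \<longleftrightarrow> b2 \<in> snd q1" "b3 \<in> X \<longleftrightarrow> b3 \<in> snd q1" "b4 \<in> X \<longleftrightarrow> b4 \<in> snd q1"
    unfolding X_def using nb1 d(1-3) by auto
  obtain a where a: "a \<in> fst q1" "flip X a \<in> covered U C" using sat inC(1) X unfolding saturated_def
    by blast
  then obtain l where l: "l \<in> C" "flip X a \<in> cube U (fst l) (snd l)" unfolding covered_def by auto
  note cv = flip_in_other_cube[OF inC(1) X a(1) l]
  have a1: "a \<noteq> b1" using a(1) S d by auto
  have "l = q2 \<or> l = q3 \<or> l = q4" using l(1) cv(1) C by auto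
  then show ?thesis
  proof (elim disjE)
    assume "l = q2"
    then have "b1 \<in> X \<longleftrightarrow> b1 \<in> snd q2" "b3 \<noteq> a \<Longrightarrow> (b3 \<in> X \<longleftrightarrow> b3 \<in> snd q2)"
      "b4 \<noteq> a \<Longrightarrow> (b4 \<in> X \<longleftrightarrow> b4 \<in> snd q2)" using cv(2) S a1 by auto
    then show ?thesis using Xm d by blast
  next
    assume "l = q3"
    then have "b1 \<in> X \<longleftrightarrow> b1 \<in> snd q3" "b2 \<noteq> a \<Longrightarrow> (b2 \<in> X \<longleftrightarrow> b2 \<in> snd q3)"
      "b4 \<noteq> a \<Longrightarrow> (b4 \<in> X \<longleftrightarrow> b4 \<in> snd q3)" using cv(2) S a1 by auto
    then show ?thesis using Xm d by blast
  next
    assume "l = q4"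
    then have "b1 \<in> X \<longleftrightarrow> b1 \<in> snd q4" "b2 \<noteq> a \<Longrightarrow> (b2 \<in> X \<longleftrightarrow> b2 \<in> snd q4)"
      "b3 \<noteq> a \<Longrightarrow> (b3 \<in> X \<longleftrightarrow> b3 \<in> snd q4)" using cv(2) S a1 by auto
    then show ?thesis using Xm d by blast
  qed
qed

lemma conflict_of_three:
  assumes "c \<in> U" "\<And>q. q \<in> C \<Longrightarrow> c \<in> fst q \<Longrightarrow> q = r \<or> q = s \<or> q = t"
  shows "\<not> ((c \<in> snd r \<longleftrightarrow> c \<in> snd s) \<and> (c \<in> snd s \<longleftrightarrow> c \<in> snd t))"
proof
  assume h: "(c \<in> snd r \<longleftrightarrow> c \<in> snd s) \<and> (c \<in> snd s \<longleftrightarrow> c \<in> snd t)"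
  obtain p q where pq: "p \<in> C" "q \<in> C" "c \<in> fst p" "c \<in> fst q" "c \<in> snd p" "c \<notin> snd q"
    using conf assms(1) unfolding conflicting_def by blast
  have "p = r \<or> p = s \<or> p = t" "q = r \<or> q = s \<or> q = t" using assms(2) pq by auto
  then show False using h pq by auto
qed

definition four_points_witness ::
  "nat set \<times> nat set \<Rightarrow> nat set \<times> nat set \<Rightarrow> nat set \<times> nat set \<Rightarrow> nat set \<times> nat set \<Rightarrow>
    nat \<Rightarrow> nat \<Rightarrow> nat \<Rightarrow> nat \<Rightarrow> bool" where
  "four_points_witness p q r s bp bq br bs \<longleftrightarrow> (br \<in> snd p \<longleftrightarrow> br \<notin> snd q) \<and> (bs \<in> snd p \<longleftrightarrow> bs \<notin> snd q) \<and>
    \<not> ((bp \<in> snd r \<longleftrightarrow> bp \<in> snd q) \<and> (bq \<in> snd r \<longleftrightarrow> bq \<in> snd p) \<and> (bs \<in> snd r \<longleftrightarrow> bs \<in> snd q)) \<and>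
    \<not> ((bp \<in> snd s \<longleftrightarrow> bp \<in> snd q) \<and> (bq \<in> snd s \<longleftrightarrow> bq \<in> snd p) \<and> (br \<in> snd s \<longleftrightarrow> br \<in> snd p)) \<and>
    \<not> ((bp \<in> snd r \<longleftrightarrow> bp \<in> snd q) \<and> (bq \<in> snd r \<longleftrightarrow> bq \<in> snd p) \<and> (bs \<in> snd r \<longleftrightarrow> bs \<in> snd p)) \<and>
    \<not> ((bp \<in> snd s \<longleftrightarrow> bp \<in> snd q) \<and> (bq \<in> snd s \<longleftrightarrow> bq \<in> snd p) \<and> (br \<in> snd s \<longleftrightarrow> br \<in> snd q))"

lemma four_points_witness_not_s_extremal:
  assumes C: "C = {p,q,r,s}" and U: "U = {bp,bq,br,bs}"
    and d: "bp \<noteq> bq" "bp \<noteq> br" "bp \<noteq> bs" "bq \<noteq> br" "bq \<noteq> bs" "br \<noteq> bs"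
    and free: "free p = {bp}" "free q = {bq}" "free r = {br}" "free s = {bs}"
    and cw: "four_points_witness p q r s bp bq br bs"
  shows "\<not> s_extremal (uncovered U C)"
proof -
  have inC: "p \<in> C" "q \<in> C" "r \<in> C" "s \<in> C" using C by auto
  have S: "fst p = {bq,br,bs}" "fst q = {bp,br,bs}" "fst r = {bp,bq,bs}" "fst s = {bp,bq,br}"
    using fixed_eq[OF inC(1)] fixed_eq[OF inC(2)] fixed_eq[OF inC(3)] fixed_eq[OF inC(4)] free U d
      by auto
  show ?thesis
    by (rule not_s_extremal_four_points[OF d U C S])
      (use cube_in_ground[OF inC(1)] cube_in_ground[OF inC(2)] cube_in_ground[OF inC(3)]
        cube_in_ground[OF inC(4)] cw in
      \<open>auto simp: four_points_witness_def\<close>)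
qed

lemma not_s_extremal_card4_points:
  assumes C: "C = {q1,q2,q3,q4}" and U: "U = {b1,b2,b3,b4}"
    and d: "b1 \<noteq> b2" "b1 \<noteq> b3" "b1 \<noteq> b4" "b2 \<noteq> b3" "b2 \<noteq> b4" "b3 \<noteq> b4"
    and free: "free q1 = {b1}" "free q2 = {b2}" "free q3 = {b3}" "free q4 = {b4}"
  shows "\<not> s_extremal (uncovered U C)"
proof -
  have inC: "q1 \<in> C" "q2 \<in> C" "q3 \<in> C" "q4 \<in> C" using C by auto
  have S: "fst q1 = {b2,b3,b4}" "fst q2 = {b1,b3,b4}" "fst q3 = {b1,b2,b4}" "fst q4 = {b1,b2,b3}"
    using fixed_eq[OF inC(1)] fixed_eq[OF inC(2)] fixed_eq[OF inC(3)] fixed_eq[OF inC(4)] free U d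
      by auto
  have C2: "C = {q2,q1,q3,q4}" "C = {q3,q1,q2,q4}" "C = {q4,q1,q2,q3}" using C by auto
  have U2: "U = {b2,b1,b3,b4}" "U = {b3,b1,b2,b4}" "U = {b4,b1,b2,b3}" using U by auto
  note c1 = four_points_flip[OF C U d free]
  note c2 = four_points_flip[OF C2(1) U2(1) d(1)[symmetric] d(4,5) d(2,3,6) free(2,1,3,4)]
  note c3 = four_points_flip[OF C2(2) U2(2) d(2)[symmetric] d(4)[symmetric] d(6) d(1,3,5)
    free(3,1,2,4)]
  note c4 = four_points_flip[OF C2(3) U2(3) d(3)[symmetric] d(5)[symmetric] d(6)[symmetric] d(1,2,4)
    free(4,1,2,3)]
  have fix1: "\<And>q. q \<in> C \<Longrightarrow> b1 \<in> fst q \<Longrightarrow> q = q2 \<or> q = q3 \<or> q = q4" using C S d by auto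
  have fix2: "\<And>q. q \<in> C \<Longrightarrow> b2 \<in> fst q \<Longrightarrow> q = q1 \<or> q = q3 \<or> q = q4" using C S d by auto
  have fix3: "\<And>q. q \<in> C \<Longrightarrow> b3 \<in> fst q \<Longrightarrow> q = q1 \<or> q = q2 \<or> q = q4" using C S d by auto
  have fix4: "\<And>q. q \<in> C \<Longrightarrow> b4 \<in> fst q \<Longrightarrow> q = q1 \<or> q = q2 \<or> q = q3" using C S d by auto
  have bU: "b1 \<in> U" "b2 \<in> U" "b3 \<in> U" "b4 \<in> U" using U by auto
  note f1 = conflict_of_three[OF bU(1) fix1] and f2 = conflict_of_three[OF bU(2) fix2]
    and f3 = conflict_of_three[OF bU(3) fix3] and f4 = conflict_of_three[OF bU(4) fix4]
  have "four_points_witness q1 q2 q3 q4 b1 b2 b3 b4 \<or> four_points_witness q1 q3 q2 q4 b1 b3 b2 b4 \<or> four_points_witness q1 q4 q2 q3 b1 b4 b2 b3 \<or>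
        four_points_witness q2 q3 q1 q4 b2 b3 b1 b4 \<or> four_points_witness q2 q4 q1 q3 b2 b4 b1 b3 \<or>
          four_points_witness q3 q4 q1 q2 b3 b4 b1 b2"
    unfolding four_points_witness_def
      using c1[of True] c1[of False] c2[of True] c2[of False] c3[of True] c3[of False]
      c4[of True] c4[of False] f1 f2 f3 f4 by argo
  then show ?thesis
  proof (elim disjE)
    assume "four_points_witness q1 q2 q3 q4 b1 b2 b3 b4"
    then show ?thesis using four_points_witness_not_s_extremal[OF C U d free] by blast
  next
    assume "four_points_witness q1 q3 q2 q4 b1 b3 b2 b4"
    moreover have "C = {q1,q3,q2,q4}" "U = {b1,b3,b2,b4}" using C U by auto
    ultimately show ?thesis using four_points_witness_not_s_extremal d free by blast
  next
    assume "four_points_witness q1 q4 q2 q3 b1 b4 b2 b3"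
    moreover have "C = {q1,q4,q2,q3}" "U = {b1,b4,b2,b3}" using C U by auto
    ultimately show ?thesis using four_points_witness_not_s_extremal d free by blast
  next
    assume "four_points_witness q2 q3 q1 q4 b2 b3 b1 b4"
    moreover have "C = {q2,q3,q1,q4}" "U = {b2,b3,b1,b4}" using C U by auto
    ultimately show ?thesis using four_points_witness_not_s_extremal d free by blast
  next
    assume "four_points_witness q2 q4 q1 q3 b2 b4 b1 b3"
    moreover have "C = {q2,q4,q1,q3}" "U = {b2,b4,b1,b3}" using C U by auto
    ultimately show ?thesis using four_points_witness_not_s_extremal d free by blast
  next
    assume "four_points_witness q3 q4 q1 q2 b3 b4 b1 b2"
    moreover have "C = {q3,q4,q1,q2}" "U = {b3,b4,b1,b2}" using C U by auto
    ultimately show ?thesis using four_points_witness_not_s_extremal d free by blast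
  qed
qed


lemma free_cover4: assumes "c \<in> U" "C = {p1,p2,p3,p4}" shows
  "c \<in> free p1 \<or> c \<in> free p2 \<or> c \<in> free p3 \<or> c \<in> free p4"
  using free_cover[OF assms(1)] assms(2) by auto

lemma pair_orient: assumes "free p = {b,c}" "x \<in> free p" obtains y where "free p = {x,y}"
  "y \<noteq> x \<or> b = c"
  using assms by (metis insertE insert_commute singletonD)

lemma obtain_free_pair:
  assumes k: "card C = 4" and pq: "p \<in> C" "q \<in> C" "q \<noteq> p" and x: "x \<in> free p" "x \<in> free q"
  obtains t where "free p = {x,t}" "t \<noteq> x"
proof -
  have "free p \<noteq> {x}"
  proof
    assume "free p = {x}"
    then have "free p \<subseteq> free q" using x(2) by simp
    then show False using free_antichain[OF pq(1,2)] pq(3) by simp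
  qed
  from free_card_1_or_2[OF k pq(1)] show ?thesis
  proof (elim disjE exE conjE)
    fix b assume "free p = {b}"
    then show ?thesis using x(1) \<open>free p \<noteq> {x}\<close> by auto
  next
    fix b c assume bc: "b \<noteq> c" "free p = {b,c}"
    show ?thesis
    proof (cases "x = b")
      case True
      then show ?thesis using that bc by simp
    next
      case False
      then have "x = c" using x(1) bc(2) by simp
      then show ?thesis using that[of b] bc by (simp add: insert_commute)
    qed
  qed
qed

lemma free_singleton_if_private:
  assumes k: "card C = 4" and p: "p \<in> C" and dis: "\<And>q z. q \<in> C \<Longrightarrow> q \<noteq> p \<Longrightarrow> z \<in> free p \<Longrightarrow> z \<notin> free q"
  obtains e where "free p = {e}"
proof -
  have "\<not> (\<exists>b c. b \<noteq> c \<and> free p = {b,c})"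
  proof
    assume "\<exists>b c. b \<noteq> c \<and> free p = {b,c}"
    then obtain b c where "b \<noteq> c" "free p = {b,c}" by blast
    then show False using free_pair_shared[OF k p] dis by blast
  qed
  then show ?thesis using free_card_1_or_2[OF k p] that by blast
qed

lemma not_s_extremal_free_triangle:
  assumes C: "C = {p1,p2,p3,p4}" and dp: "p1 \<noteq> p2" "p1 \<noteq> p3" "p1 \<noteq> p4" "p2 \<noteq> p3" "p2 \<noteq> p4" "p3 \<noteq> p4"
    and D1: "free p1 = {x1,x2}" and D2: "free p2 = {x2,x3}" and D3: "free p3 = {x1,x3}"
    and d: "x1 \<noteq> x2" "x2 \<noteq> x3" "x1 \<noteq> x3"
  shows "\<not> s_extremal (uncovered U C)"
proof -
  have k: "card C = 4" using C dp by simp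
  have inC: "p1 \<in> C" "p2 \<in> C" "p3 \<in> C" "p4 \<in> C" using C by auto
  have x1n: "x1 \<notin> free p4" using not_in_free_of_three[of x1 p1 p3 p4] D1 D3 inC dp by auto
  have x2n: "x2 \<notin> free p4" using not_in_free_of_three[of x2 p1 p2 p4] D1 D2 inC dp by auto
  have x3n: "x3 \<notin> free p4" using not_in_free_of_three[of x3 p2 p3 p4] D2 D3 inC dp by auto
  obtain d0 where D4: "free p4 = {d0}"
    by (rule free_singleton_if_private[OF k inC(4)]) (use C D1 D2 D3 x1n x2n x3n in auto)
  have d0: "d0 \<noteq> x1" "d0 \<noteq> x2" "d0 \<noteq> x3" using x1n x2n x3n D4 by auto
  have U: "U = {x1,x2,x3,d0}"
  proof
    show "U \<subseteq> {x1,x2,x3,d0}" using free_cover4[OF _ C] D1 D2 D3 D4 by blast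
    show "{x1,x2,x3,d0} \<subseteq> U" using free_subset D1 D2 D4 by blast
  qed
  have S: "fst p1 = {x3,d0}" "fst p2 = {x1,d0}" "fst p3 = {x2,d0}" "fst p4 = {x1,x2,x3}"
    using fixed_eq[OF inC(1)] fixed_eq[OF inC(2)] fixed_eq[OF inC(3)] fixed_eq[OF inC(4)] D1 D2 D3
      D4 U d d0
    by auto
  have H: "snd p1 \<subseteq> fst p1" "snd p2 \<subseteq> fst p2" "snd p3 \<subseteq> fst p3" "snd p4 \<subseteq> fst p4"
    using cube_in_ground inC by auto
  have Ux: "x1 \<in> U" "x2 \<in> U" "x3 \<in> U" "d0 \<in> U" using U by auto
  have c1: "x1 \<in> snd p2 \<longleftrightarrow> x1 \<notin> snd p4"
    by (rule conflict_of_two[OF Ux(1) inC(2) inC(4)]) (use C S d d0 in auto)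
  have c2: "x2 \<in> snd p3 \<longleftrightarrow> x2 \<notin> snd p4"
    by (rule conflict_of_two[OF Ux(2) inC(3) inC(4)]) (use C S d d0 in auto)
  have c3: "x3 \<in> snd p1 \<longleftrightarrow> x3 \<notin> snd p4"
    by (rule conflict_of_two[OF Ux(3) inC(1) inC(4)]) (use C S d d0 in auto)
  have c4: "\<not> ((d0 \<in> snd p1 \<longleftrightarrow> d0 \<in> snd p2) \<and> (d0 \<in> snd p2 \<longleftrightarrow> d0 \<in> snd p3))"
    by (rule conflict_of_three[OF Ux(4)]) (use C S d d0 in auto)
  have dd: "x1 \<noteq> x2" "x1 \<noteq> x3" "x1 \<noteq> d0" "x2 \<noteq> x3" "x2 \<noteq> d0" "x3 \<noteq> d0" using d d0 by auto
  consider "d0 \<in> snd p2 \<longleftrightarrow> d0 \<notin> snd p3" | "d0 \<in> snd p1 \<longleftrightarrow> d0 \<notin> snd p3"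
    | "d0 \<in> snd p1 \<longleftrightarrow> d0 \<notin> snd p2"
    using c4 by blast
  then show ?thesis
  proof cases
    case 1
    show ?thesis
      by (rule not_s_extremal_triangle_point[of x1 x2 x3 d0 U C p1 p2 p3 p4])
        (use dd U C S H c1 c2 c3 1 in auto)
  next
    case 2
    have "U = {x3,x2,x1,d0}" "C = {p2,p1,p3,p4}" using U C by auto
    then show ?thesis
      by (rule not_s_extremal_triangle_point[of x3 x2 x1 d0 U C p2 p1 p3 p4, rotated 6])
        (use dd S H c1 c2 c3 2 in auto)
  next
    case 3
    have "U = {x3,x1,x2,d0}" "C = {p3,p1,p2,p4}" using U C by auto
    then show ?thesis
      by (rule not_s_extremal_triangle_point[of x3 x1 x2 d0 U C p3 p1 p2 p4, rotated 6])
        (use dd S H c1 c2 c3 3 in auto)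
  qed
qed

lemma not_s_extremal_free_cycle:
  assumes C: "C = {p1,p2,p3,p4}" and dp: "p1 \<noteq> p2" "p1 \<noteq> p3" "p1 \<noteq> p4" "p2 \<noteq> p3" "p2 \<noteq> p4" "p3 \<noteq> p4"
    and D1: "free p1 = {x1,x2}" and D2: "free p2 = {x2,x3}" and D3: "free p3 = {x1,y}"
    and D4: "free p4 = {x3,y}"
    and dd: "x1 \<noteq> x2" "x1 \<noteq> x3" "x1 \<noteq> y" "x2 \<noteq> x3" "x2 \<noteq> y" "x3 \<noteq> y"
  shows "\<not> s_extremal (uncovered U C)"
proof -
  have inC: "p1 \<in> C" "p2 \<in> C" "p3 \<in> C" "p4 \<in> C" using C by auto
  have U: "U = {x1,x2,x3,y}"
  proof
    show "U \<subseteq> {x1,x2,x3,y}" using free_cover4[OF _ C] D1 D2 D3 D4 by blast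
    show "{x1,x2,x3,y} \<subseteq> U" using free_subset D1 D2 D3 by blast
  qed
  have S: "fst p1 = {x3,y}" "fst p2 = {y,x1}" "fst p4 = {x1,x2}" "fst p3 = {x2,x3}"
    using fixed_eq[OF inC(1)] fixed_eq[OF inC(2)] fixed_eq[OF inC(3)] fixed_eq[OF inC(4)] D1 D2 D3
      D4 U dd
    by auto
  have H: "snd p1 \<subseteq> fst p1" "snd p2 \<subseteq> fst p2" "snd p4 \<subseteq> fst p4" "snd p3 \<subseteq> fst p3"
    using cube_in_ground inC by auto
  have Ux: "x1 \<in> U" "x2 \<in> U" "x3 \<in> U" "y \<in> U" using U by auto
  have cw: "x1 \<in> snd p2 \<longleftrightarrow> x1 \<notin> snd p4"
    by (rule conflict_of_two[OF Ux(1) inC(2) inC(4)]) (use C S dd in auto)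
  have cx: "x2 \<in> snd p4 \<longleftrightarrow> x2 \<notin> snd p3"
    by (rule conflict_of_two[OF Ux(2) inC(4) inC(3)]) (use C S dd in auto)
  have cy: "x3 \<in> snd p3 \<longleftrightarrow> x3 \<notin> snd p1"
    by (rule conflict_of_two[OF Ux(3) inC(3) inC(1)]) (use C S dd in auto)
  have cz: "y \<in> snd p1 \<longleftrightarrow> y \<notin> snd p2"
    by (rule conflict_of_two[OF Ux(4) inC(1) inC(2)]) (use C S dd in auto)
  have C': "C = {p1,p2,p4,p3}" using C by auto
  show ?thesis by (rule not_s_extremal_four_cycle[OF dd U C' S H cw cx cy cz])
qed

lemma not_s_extremal_shared_end:
  assumes k: "card C = 4" and C: "C = {p1,p2,p3,p4}"
    and dp: "p1 \<noteq> p2" "p1 \<noteq> p3" "p1 \<noteq> p4" "p2 \<noteq> p3" "p2 \<noteq> p4" "p3 \<noteq> p4"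
    and D1: "free p1 = {x1,x2}" and D2: "free p2 = {x2,x3}" and d: "x1 \<noteq> x2" "x2 \<noteq> x3" "x1 \<noteq> x3"
    and x13: "x1 \<in> free p3"
  shows "\<not> s_extremal (uncovered U C)"
proof -
  have inC: "p1 \<in> C" "p2 \<in> C" "p3 \<in> C" "p4 \<in> C" using C by auto
  have x2n: "x2 \<notin> free p3" "x2 \<notin> free p4"
    using not_in_free_of_three[of x2 p1 p2 p3] not_in_free_of_three[of x2 p1 p2 p4] D1 D2 inC dp
      by auto
  have x1n: "x1 \<notin> free p4" "x1 \<notin> free p2"
    using not_in_free_of_three[of x1 p1 p3 p4] D1 D2 x13 inC dp d by auto
  have "x1 \<in> free p3" "x1 \<in> free p1" using x13 D1 by auto
  then obtain y where D3: "free p3 = {x1,y}" "y \<noteq> x1"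
    by (rule obtain_free_pair[OF k inC(3) inC(1) dp(2)])
  have yx2: "y \<noteq> x2" using x2n D3 by auto
  show ?thesis
  proof (cases "y = x3")
    case True
    then show ?thesis using not_s_extremal_free_triangle[OF C dp D1 D2 _ d] D3 by simp
  next
    case False
    note y3 = False
    show ?thesis
    proof (cases "x3 \<in> free p4")
      case True
      have "x3 \<in> free p4" "x3 \<in> free p2" using True D2 by auto
      then obtain t where D4: "free p4 = {x3,t}" "t \<noteq> x3"
        by (rule obtain_free_pair[OF k inC(4) inC(2) dp(5)])
      have t: "t \<noteq> x1" "t \<noteq> x2" using x1n x2n D4 by auto
      show ?thesis
      proof (cases "t = y")
        case True
        then show ?thesis
          using not_s_extremal_free_cycle[OF C dp D1 D2 D3(1)] D4 d D3(2) yx2 y3 by auto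
      next
        case False
        have "False"
          by (rule no_free_path4[OF k, of p4 p2 p1 p3 t x3 x2 x1 y])
            (use C dp d D1 D2 D3 D4 t False y3 yx2 in auto)
        then show ?thesis by simp
      qed
    next
      case False
      note x3n = False
      show ?thesis
      proof (cases "y \<in> free p4")
        case True
        have "y \<in> free p4" "y \<in> free p3" using True D3 by auto
        then obtain t where D4: "free p4 = {y,t}" "t \<noteq> y"
          by (rule obtain_free_pair[OF k inC(4) inC(3) dp(6)])
        have t: "t \<noteq> x1" "t \<noteq> x2" "t \<noteq> x3" using x1n x2n x3n D4 by auto
        have "False"
          by (rule no_free_path4[OF k, of p2 p1 p3 p4 x3 x2 x1 y t])
            (use C dp d D1 D2 D3 D4 t y3 yx2 in auto)
        then show ?thesis by simp
      next
        case False
        obtain e where D4: "free p4 = {e}"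
          by (rule free_singleton_if_private[OF k inC(4)])
            (use C D1 D2 D3 x1n x2n x3n False in auto)
        have e: "e \<noteq> x1" "e \<noteq> x2" "e \<noteq> x3" "e \<noteq> y" using x1n x2n x3n False D4 by auto
        have "False"
          by (rule no_free_path3_point[OF k, of p2 p1 p3 p4 x3 x2 x1 y e])
            (use C dp d D1 D2 D3 D4 e y3 yx2 in auto)
        then show ?thesis by simp
      qed
    qed
  qed
qed


lemma no_shared_other_end:
  assumes k: "card C = 4" and C: "C = {p1,p2,p3,p4}"
    and dp: "p1 \<noteq> p2" "p1 \<noteq> p3" "p1 \<noteq> p4" "p2 \<noteq> p3" "p2 \<noteq> p4" "p3 \<noteq> p4"
    and D1: "free p1 = {x1,x2}" and D2: "free p2 = {x2,x3}" and d: "x1 \<noteq> x2" "x2 \<noteq> x3" "x1 \<noteq> x3"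
    and x1n: "x1 \<notin> free p3" "x1 \<notin> free p4" and x33: "x3 \<in> free p3"
  shows False
proof -
  have inC: "p1 \<in> C" "p2 \<in> C" "p3 \<in> C" "p4 \<in> C" using C by auto
  have x2n: "x2 \<notin> free p3" "x2 \<notin> free p4"
    using not_in_free_of_three[of x2 p1 p2 p3] not_in_free_of_three[of x2 p1 p2 p4] D1 D2 inC dp
      by auto
  have "x3 \<in> free p3" "x3 \<in> free p2" using x33 D2 by auto
  then obtain y where D3: "free p3 = {x3,y}" "y \<noteq> x3"
    by (rule obtain_free_pair[OF k inC(3) inC(2) dp(4)])
  have y: "y \<noteq> x2" "y \<noteq> x1" using x2n x1n D3 by auto
  have x3n: "x3 \<notin> free p4" using not_in_free_of_three[of x3 p2 p3 p4] D2 D3 inC dp by auto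
  show False
  proof (cases "y \<in> free p4")
    case True
    have "y \<in> free p4" "y \<in> free p3" using True D3 by auto
    then obtain t where D4: "free p4 = {y,t}" "t \<noteq> y"
      by (rule obtain_free_pair[OF k inC(4) inC(3) dp(6)])
    have t: "t \<noteq> x1" "t \<noteq> x2" "t \<noteq> x3" using x1n x2n x3n D4 by auto
    show False
      by (rule no_free_path4[OF k, of p1 p2 p3 p4 x1 x2 x3 y t])
        (use C dp d D1 D2 D3 D4 t y in auto)
  next
    case False
    obtain e where D4: "free p4 = {e}"
      by (rule free_singleton_if_private[OF k inC(4)]) (use C D1 D2 D3 x1n x2n x3n False in auto)
    have e: "e \<noteq> x1" "e \<noteq> x2" "e \<noteq> x3" "e \<noteq> y" using x1n x2n x3n False D4 by auto
    show False
      by (rule no_free_path3_point[OF k, of p1 p2 p3 p4 x1 x2 x3 y e])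
        (use C dp d D1 D2 D3 D4 e y in auto)
  qed
qed

lemma not_s_extremal_adjacent_pairs:
  assumes k: "card C = 4" and p: "p1 \<in> C" "p2 \<in> C" "p1 \<noteq> p2"
    and D1: "free p1 = {x1,x2}" and D2: "free p2 = {x2,x3}" and d: "x1 \<noteq> x2" "x2 \<noteq> x3" "x1 \<noteq> x3"
  shows "\<not> s_extremal (uncovered U C)"
proof -
  have "card (C - {p1,p2}) = 2" using k p finite_system by (simp add: card_Diff_subset)
  then obtain p3 p4 where m: "C - {p1, p2} = {p3, p4}" "p3 \<noteq> p4" using card_2_iff by metis
  have C: "C = {p1,p2,p3,p4}" using m p by auto
  have dp: "p1 \<noteq> p2" "p1 \<noteq> p3" "p1 \<noteq> p4" "p2 \<noteq> p3" "p2 \<noteq> p4" "p3 \<noteq> p4" using m p by auto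
  have C': "C = {p1,p2,p4,p3}" using C by auto
  have dp': "p1 \<noteq> p2" "p1 \<noteq> p4" "p1 \<noteq> p3" "p2 \<noteq> p4" "p2 \<noteq> p3" "p4 \<noteq> p3" using dp by auto
  show ?thesis
  proof (cases "x1 \<in> free p3")
    case True then show ?thesis using not_s_extremal_shared_end[OF k C dp D1 D2 d] by blast
  next
    case n3: False
    show ?thesis
    proof (cases "x1 \<in> free p4")
      case True then show ?thesis using not_s_extremal_shared_end[OF k C' dp' D1 D2 d] by blast
    next
      case n4: False
      show ?thesis
      proof (cases "x3 \<in> free p3")
        case True then show ?thesis using no_shared_other_end[OF k C dp D1 D2 d n3 n4] by blast
      next
        case m3: False
        show ?thesis
        proof (cases "x3 \<in> free p4")
          case True then show ?thesis using no_shared_other_end[OF k C' dp' D1 D2 d n4 n3] by blast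
        next
          case m4: False
          have "False"
          proof (rule no_free_path2_private[OF p D1 D2 d])
            fix r assume "r \<in> C" "r \<noteq> p1"
            then show "x1 \<notin> free r" using C n3 n4 D2 d by auto
          next
            fix r assume "r \<in> C" "r \<noteq> p2"
            then show "x3 \<notin> free r" using C m3 m4 D1 d by auto
          qed
          then show ?thesis by simp
        qed
      qed
    qed
  qed
qed

lemma not_s_extremal_card3:
  assumes k: "card C = 3"
  shows "\<not> s_extremal (uncovered U C)"
proof -
  obtain p1 p2 p3 where C: "C = {p1,p2,p3}" "p1 \<noteq> p2" "p2 \<noteq> p3" "p1 \<noteq> p3" using k card_3_iff
    by metis
  have inC: "p1 \<in> C" "p2 \<in> C" "p3 \<in> C" using C by auto
  have single: "\<exists>b. free p = {b}" if pC: "p \<in> C" for p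
  proof -
    obtain b where "b \<in> free p" using free_nonempty[OF pC] by auto
    moreover have "\<And>c. c \<in> free p \<Longrightarrow> c = b" using no_two_free[OF k pC] calculation by blast
    ultimately show ?thesis by blast
  qed
  obtain b1 b2 b3 where free: "free p1 = {b1}" "free p2 = {b2}" "free p3 = {b3}" using single inC
    by metis
  have d: "b1 \<noteq> b2" "b1 \<noteq> b3" "b2 \<noteq> b3" using free_antichain inC free C by (metis subset_refl)+
  have U: "U = {b1,b2,b3}"
  proof
    show "U \<subseteq> {b1,b2,b3}" using free_cover C free by blast
    show "{b1,b2,b3} \<subseteq> U" using free_subset free by blast
  qed
  have S: "fst p1 = {b2,b3}" "fst p2 = {b1,b3}" "fst p3 = {b1,b2}"
    using fixed_eq[OF inC(1)] fixed_eq[OF inC(2)] fixed_eq[OF inC(3)] free U d by auto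
  have H: "snd p1 \<subseteq> fst p1" "snd p2 \<subseteq> fst p2" "snd p3 \<subseteq> fst p3" using cube_in_ground inC by auto
  have Ub: "b1 \<in> U" "b2 \<in> U" "b3 \<in> U" using U by auto
  have c1: "b1 \<in> snd p2 \<longleftrightarrow> b1 \<notin> snd p3" by (rule conflict_of_two[OF Ub(1) inC(2) inC(3)])
    (use C S d in auto)
  have c2: "b2 \<in> snd p1 \<longleftrightarrow> b2 \<notin> snd p3" by (rule conflict_of_two[OF Ub(2) inC(1) inC(3)])
    (use C S d in auto)
  have c3: "b3 \<in> snd p1 \<longleftrightarrow> b3 \<notin> snd p2" by (rule conflict_of_two[OF Ub(3) inC(1) inC(2)])
    (use C S d in auto)
  show ?thesis by (rule not_s_extremal_three_points[OF d U C(1) S H c1 c2 c3])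
qed

lemma not_s_extremal_card4_singletons:
  assumes k: "card C = 4" and al: "\<forall>p\<in>C. \<exists>b. free p = {b}"
  shows "\<not> s_extremal (uncovered U C)"
proof -
  obtain q1 q2 q3 q4 where C: "C = {q1,q2,q3,q4}" "q1 \<noteq> q2" "q1 \<noteq> q3" "q1 \<noteq> q4" "q2 \<noteq> q3" "q2 \<noteq> q4"
    "q3 \<noteq> q4"
    using card_4_obtain[OF k] by metis
  have inC: "q1 \<in> C" "q2 \<in> C" "q3 \<in> C" "q4 \<in> C" using C by auto
  obtain b1 b2 b3 b4 where free: "free q1 = {b1}" "free q2 = {b2}" "free q3 = {b3}" "free q4 = {b4}"
    using al inC by metis
  have d: "b1 \<noteq> b2" "b1 \<noteq> b3" "b1 \<noteq> b4" "b2 \<noteq> b3" "b2 \<noteq> b4" "b3 \<noteq> b4"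
    using free_antichain inC free C by (metis subset_refl)+
  have U: "U = {b1,b2,b3,b4}"
  proof
    show "U \<subseteq> {b1,b2,b3,b4}" using free_cover C free by blast
    show "{b1,b2,b3,b4} \<subseteq> U" using free_subset free by blast
  qed
  show ?thesis by (rule not_s_extremal_card4_points[OF C(1) U d free])
qed

lemma not_s_extremal: "\<not> s_extremal (uncovered U C)"
proof -
  have "card C = 3 \<or> card C = 4" using card_ge_3 card_le_4 by linarith
  then show ?thesis
  proof
    assume "card C = 3" then show ?thesis by (rule not_s_extremal_card3)
  next
    assume k: "card C = 4"
    show ?thesis
    proof (cases "\<forall>p\<in>C. \<exists>b. free p = {b}")
      case True then show ?thesis using not_s_extremal_card4_singletons[OF k] by blast
    next
      case False
      then obtain p where p: "p \<in> C" and ns: "\<not> (\<exists>b. free p = {b})" by blast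
      then obtain b c where bc: "b \<noteq> c" "free p = {b,c}" using free_card_1_or_2[OF k p] by blast
      obtain q where q: "q \<in> C" "q \<noteq> p" "b \<in> free q \<or> c \<in> free q"
        using free_pair_shared[OF k p bc(2,1)] by blast
      have nsq: "\<not> (\<exists>z. free q = {z})"
      proof
        assume "\<exists>z. free q = {z}"
        then obtain z where z: "free q = {z}" by blast
        then have "free q \<subseteq> free p" using q(3) bc by auto
        then show False using free_antichain[OF q(1) p] q(2) by simp
      qed
      then obtain u v where uv: "u \<noteq> v" "free q = {u,v}" using free_card_1_or_2[OF k q(1)] by blast
      have neq: "free q \<noteq> free p" using free_antichain[OF q(1) p] q(2) by auto
      from q(3) show ?thesis
      proof
        assume "c \<in> free q"
        then obtain x3 where x3: "free q = {c,x3}" "x3 \<noteq> c" using uv by (metis pair_orient)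
        have "x3 \<noteq> b" using x3 bc neq by auto
        then show ?thesis
          using not_s_extremal_adjacent_pairs[OF k p q(1) q(2)[symmetric] bc(2) x3(1) bc(1)
            x3(2)[symmetric]] by blast
      next
        assume "b \<in> free q"
        then obtain x3 where x3: "free q = {b,x3}" "x3 \<noteq> b" using uv by (metis pair_orient)
        have "x3 \<noteq> c" using x3 bc neq by auto
        moreover have "free p = {c,b}" using bc by auto
        ultimately show ?thesis
          using not_s_extremal_adjacent_pairs[OF k p q(1) q(2)[symmetric], of c b x3] bc(1) x3
            by auto
      qed
    qed
  qed
qed

end


section \<open>Extending s-extremal families\<close>

lemma saturated_not_s_extremal:
  assumes "cube_system U C" "C \<noteq> {}" "card C \<le> 4" "saturated U C"
  shows "\<not> s_extremal (uncovered U C)"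
  using assms
proof (induction "card U" arbitrary: U C rule: less_induct)
  case less
  note wf = less.prems(1) and sat = less.prems(4)
  have finU: "finite U" using cube_systemD(1)[OF wf] .
  have finC: "finite C" using finite_cube_system[OF wf] .
  consider (noncritical) c where "c \<in> U" "\<not> critical C c"
    | (nonconflicting) c where "c \<in> U" "critical C c" "\<not> conflicting C c"
    | (base) "\<forall>c\<in>U. critical C c" "\<forall>c\<in>U. conflicting C c"
    by blast
  then show ?case
  proof cases
    case noncritical
    have smaller: "card (U - {c}) < card U" using noncritical(1) finU by (meson card_Diff1_less)
    have "drop_coord c C \<noteq> {}" "card (drop_coord c C) \<le> 4"
      using less.prems(2,3) card_image_le[OF finC] unfolding drop_coord_def
        by (auto intro: le_trans)
    then have "\<not> s_extremal (uncovered (U - {c}) (drop_coord c C))"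
      using less.hyps[OF smaller cube_system_drop_coord[OF wf noncritical(2)]]
        saturated_drop_coord[OF wf noncritical sat] by blast
    then show ?thesis
      using uncovered_drop_coord[OF wf noncritical(1)] s_extremal_reduct[OF finU
        uncovered_subset_Pow]
      by auto
  next
    case nonconflicting
    have smaller: "card (U - {c}) < card U" using nonconflicting(1) finU by (meson card_Diff1_less)
    have "cubes_avoiding c C \<noteq> {}"
      using nonconflicting(2) unfolding critical_def cubes_avoiding_def by blast
    moreover have "card (cubes_avoiding c C) \<le> 4"
      using less.prems(3) card_mono[OF finC, of "cubes_avoiding c C"]
      unfolding cubes_avoiding_def by auto
    ultimately have "\<not> s_extremal (uncovered (U - {c}) (cubes_avoiding c C))"
      using less.hyps[OF smaller cube_system_cubes_avoiding[OF wf]]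
        saturated_cubes_avoiding[OF wf nonconflicting(1,3) sat] by blast
    then show ?thesis
      using uncovered_cubes_avoiding[OF nonconflicting(1,3)]
        s_extremal_faces[OF finU uncovered_subset_Pow]
      by (auto split: if_splits)
  next
    case base
    interpret critical_system U C using less.prems base by unfold_locales
    show ?thesis by (rule not_s_extremal)
  qed
qed

lemma Sh_insert_new_trace:
  assumes "T \<in> Sh (insert X F)" "T \<notin> Sh F" "Z \<in> F"
  shows "Z \<inter> T \<noteq> X \<inter> T"
proof
  assume "Z \<inter> T = X \<inter> T"
  then have "(\<lambda>A. A \<inter> T) ` insert X F = (\<lambda>A. A \<inter> T) ` F" using assms(3) by auto
  then show False using assms(1,2) unfolding Sh_def shatters_def by simp
qed

text \<open>Uncovering a point \<open>X\<close> of the cube \<open>p\<close> whose neighbours in the directions \<open>fst p\<close> are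
  all uncovered creates at most one new shattered set, namely \<open>fst p\<close>: a new shattered set must
  contain every such direction, as flipping \<open>X\<close> in it leaves the trace unchanged; and it cannot
  contain a free direction \<open>a\<close> of \<open>p\<close>, since the set realising the trace of \<open>flip X a\<close>
  would lie in the cube \<open>p\<close>.\<close>

lemma Sh_insert_isolated_point:
  assumes wf: "cube_system U C" and p: "p \<in> C" and X: "X \<in> cube U (fst p) (snd p)"
    and isolated: "\<And>a. a \<in> fst p \<Longrightarrow> flip X a \<notin> covered U C"
    and T: "T \<in> Sh (insert X (uncovered U C))" "T \<notin> Sh (uncovered U C)"
  shows "T = fst p"
proof
  let ?F = "uncovered U C"
  have XU: "X \<subseteq> U" and XS: "X \<inter> fst p = snd p" using X unfolding cube_def by auto
  note new_trace = Sh_insert_new_trace[OF T]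
  show fixed_sub: "fst p \<subseteq> T"
  proof
    fix a assume a: "a \<in> fst p"
    have "flip X a \<in> ?F"
      using flip_subset[OF XU, of a] a cube_systemD(3)[OF wf p] isolated[OF a]
      unfolding uncovered_def by auto
    then have "flip X a \<inter> T \<noteq> X \<inter> T" by (rule new_trace)
    moreover have "a \<notin> T \<Longrightarrow> flip X a \<inter> T = X \<inter> T" unfolding flip_def by auto
    ultimately show "a \<in> T" by blast
  qed
  show "T \<subseteq> fst p"
  proof
    fix a assume a: "a \<in> T"
    show "a \<in> fst p"
    proof (rule ccontr)
      assume an: "a \<notin> fst p"
      have "shatters (insert X ?F) T" using T(1) unfolding Sh_def by simp
      moreover have "flip (X \<inter> T) a \<subseteq> T" using a unfolding flip_def by auto
      ultimately obtain Z where Z: "Z \<in> insert X ?F" "Z \<inter> T = flip (X \<inter> T) a"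
        by (meson shattersD)
      have "a \<in> Z \<inter> T \<longleftrightarrow> a \<notin> X \<inter> T" using Z(2) by (simp add: flip_mem)
      then have "Z \<noteq> X" by blast
      then have ZF: "Z \<in> ?F" using Z(1) by simp
      have "b \<in> Z \<longleftrightarrow> b \<in> X" if "b \<in> fst p" for b
      proof -
        have "b \<in> T" "b \<noteq> a" using that fixed_sub an by auto
        moreover have "b \<in> Z \<longleftrightarrow> b \<in> flip (X \<inter> T) a" using Z(2) \<open>b \<in> T\<close> by blast
        ultimately show ?thesis by (simp add: flip_mem)
      qed
      then have "Z \<inter> fst p = snd p" using XS by blast
      then have "Z \<in> cube U (fst p) (snd p)" using ZF unfolding cube_def uncovered_def by auto
      then have "Z \<in> covered U C" using p unfolding covered_def by blast
      then show False using ZF unfolding uncovered_def by simp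
    qed
  qed
qed

lemma s_extremal_insert_isolated_point:
  assumes wf: "cube_system U C" and p: "p \<in> C" and X: "X \<in> cube U (fst p) (snd p)"
    and isolated: "\<And>a. a \<in> fst p \<Longrightarrow> flip X a \<notin> covered U C"
    and ext: "s_extremal (uncovered U C)"
  shows "X \<notin> uncovered U C" "s_extremal (insert X (uncovered U C))"
proof -
  show X_covered: "X \<notin> uncovered U C" using X p unfolding uncovered_def covered_def by blast
  show "s_extremal (insert X (uncovered U C))"
    using s_extremal_insert[OF cube_systemD(1)[OF wf] uncovered_subset_Pow ext _ X_covered]
      Sh_insert_isolated_point[OF wf p X isolated] X
    unfolding cube_def by blast
qed

lemma Qcube_eq_cube:
  assumes "H \<subseteq> T" "T \<subseteq> {1..n}"
  shows "Qcube n T H = cube {1..n} T H"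
proof (intro set_eqI iffI)
  fix X assume "X \<in> Qcube n T H"
  then show "X \<in> cube {1..n} T H" unfolding Qcube_def cube_def using assms by auto
next
  fix X assume "X \<in> cube {1..n} T H"
  then have "X = H \<union> (X - T)" "X - T \<subseteq> {1..n} - T" unfolding cube_def by auto
  then show "X \<in> Qcube n T H" unfolding Qcube_def by blast
qed

lemma Ffam_eq_uncovered:
  assumes "S \<subseteq> Pow {1..n}" "\<forall>T\<in>S. h T \<subseteq> T"
  shows "Ffam n S h = uncovered {1..n} ((\<lambda>T. (T, h T)) ` S)"
proof -
  have "Qcube n T (h T) = cube {1..n} T (h T)" if "T \<in> S" for T
    using assms that by (intro Qcube_eq_cube) auto
  then have "(\<Union>T\<in>S. Qcube n T (h T)) = covered {1..n} ((\<lambda>T. (T, h T)) ` S)"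
    unfolding covered_def by simp
  then show ?thesis unfolding Ffam_def uncovered_def by simp
qed

lemma cube_system_sperner:
  assumes "finite U" "S \<subseteq> Pow U" "sperner S" "\<forall>T\<in>S. h T \<subseteq> T"
  shows "cube_system U ((\<lambda>T. (T, h T)) ` S)"
proof -
  have "\<forall>p\<in>(\<lambda>T. (T, h T)) ` S. snd p \<subseteq> fst p \<and> fst p \<subseteq> U" using assms(2,4) by auto
  moreover have "\<forall>p\<in>(\<lambda>T. (T, h T)) ` S. \<forall>q\<in>(\<lambda>T. (T, h T)) ` S. fst p \<subseteq> fst q \<longrightarrow> p = q"
  proof (intro ballI impI)
    fix p q assume "p \<in> (\<lambda>T. (T, h T)) ` S" "q \<in> (\<lambda>T. (T, h T)) ` S" "fst p \<subseteq> fst q"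
    then obtain A B where "A \<in> S" "B \<in> S" "A \<subseteq> B" "p = (A, h A)" "q = (B, h B)" by auto
    then have "A = B" using assms(3) unfolding sperner_def by blast
    then show "p = q" using \<open>p = (A, h A)\<close> \<open>q = (B, h B)\<close> by simp
  qed
  ultimately show ?thesis using assms(1) unfolding cube_system_def by blast
qed

theorem theorem10:
  fixes n :: nat and S :: "nat set set" and h :: "nat set \<Rightarrow> nat set"
  assumes "S \<subseteq> Pow {1..n}"
    and "S \<noteq> {}"
    and "sperner S"
    and "card S \<le> 4"
    and "\<forall>T\<in>S. h T \<subseteq> T"
    and "s_extremal (Ffam n S h)"
  shows "\<exists>F. F \<subseteq> {1..n} \<and> F \<notin> Ffam n S h \<and> s_extremal (Ffam n S h \<union> {F})"
proof -
  let ?U = "{1..n}" and ?C = "(\<lambda>T. (T, h T)) ` S"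
  have wf: "cube_system ?U ?C" using cube_system_sperner[OF _ assms(1,3,5)] by simp
  have F_eq: "Ffam n S h = uncovered ?U ?C" using Ffam_eq_uncovered[OF assms(1,5)] .
  have "finite S" using assms(1) by (meson finite_Pow_iff finite_atLeastAtMost finite_subset)
  then have "card ?C \<le> 4" using card_image_le[of S "\<lambda>T. (T, h T)"] assms(4) by linarith
  then have "\<not> saturated ?U ?C"
    using saturated_not_s_extremal[OF wf] assms(2,6) F_eq by auto
  then obtain p X where p: "p \<in> ?C" and X: "X \<in> cube ?U (fst p) (snd p)"
    and isolated: "\<And>a. a \<in> fst p \<Longrightarrow> flip X a \<notin> covered ?U ?C"
    unfolding saturated_def by blast
  have "X \<subseteq> ?U" using X unfolding cube_def by simp
  moreover note s_extremal_insert_isolated_point[OF wf p X isolated assms(6)[unfolded F_eq]]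
  ultimately show ?thesis unfolding F_eq by (intro exI[of _ X]) simp
qed

end
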